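(* Let $n\ge3$, let $[\mathcal H:\partial]$, $[\mathcal G:\delta]$ be reduced $n$-crossed complexes and $([\mathcal E:\eta],p,f,\alpha,\beta)$ an $n$-butterfly from $\mathcal H$ to $\mathcal G$. If $[\mathcal Q:\xi]$ is a cofibrant replacement of $\mathcal H$ via a trivial fibration $q:\mathcal Q\to\mathcal H$, then there exists a weak equivalence $l:\mathcal Q\to\mathcal E^*$ with $p^*\circ l=q$.
   Context: A reduced $m$-crossed complex $[C:\partial]$ is a sequence of groups and homomorphisms $C_m\xrightarrow{\partial_m}\cdots\xrightarrow{\partial_2}C_1$ with an action of $C_1$ on each $C_k$ ($k\ge2$), such that $\partial_2$ is a crossed module, $C_k$ is abelian for $k\ge3$, each $\partial_k$ is $C_1$-equivariant, $\partial_{k-1}\partial_k$ is trivial, and $\partial_2(C_2)$ acts trivially on $C_k$ for $k\ge3$; morphisms commute with differentials and actions. $C_{\le m-1}$ is the truncation dropping degree $m$. The category of reduced $n$-crossed complexes carries a model structure in which weak equivalences are morphisms inducing isomorphisms on $\pi_1=C_1/\operatorname{im}\partial_2$, $\pi_k=\ker\partial_k/\operatorname{im}\partial_{k+1}$ ($2\le k\le n-1$), $\pi_n=\ker\partial_n$, and fibrations are degreewise surjections; cofibrant objects are those with the left lifting property against trivial fibrations, and a cofibrant replacement of $\mathcal H$ is a cofibrant $\mathcal Q$ with a trivial fibration $\mathcal Q\to\mathcal H$. An $n$-butterfly $([\mathcal E:\eta],p,f,\alpha,\beta)$ from $[\mathcal H:\partial]$ to $[\mathcal G:\delta]$ consists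 of a reduced $(n-1)$-crossed complex $[\mathcal E:\eta]$, morphisms $p:\mathcal E\to\mathcal H_{\le n-1}$, $f:\mathcal E\to\mathcal G_{\le n-1}$, and homomorphisms $\alpha:\mathcal H_n\to\mathcal E_{n-1}$, $\beta:\mathcal G_n\to\mathcal E_{n-1}$ with $p_{n-1}\alpha=\partial_n$, $f_{n-1}\beta=\delta_n$, such that: (B2) $1\to\mathcal G_n\xrightarrow{\beta}\mathcal E_{n-1}\xrightarrow{u_{n-1}}\ker\eta_{n-2}\times_{\ker\partial_{n-2}}\mathcal H_{n-1}\to1$ is exact and $u_k:\mathcal E_k\to\ker\eta_{k-1}\times_{\ker\partial_{k-1}}\mathcal H_k$ is surjective for $k\le n-2$, where $u_k(x)=(\eta_k(x),p_k(x))$, the target being the fibre product of $p_{k-1}:\ker\eta_{k-1}\to\ker\partial_{k-1}$ and $\partial_k$ (conventions $\ker\eta_0=\ker\partial_0=1$, $\ker\eta_1=\mathcal E_1$, $\ker\partial_1=\mathcal H_1$); (B3) $\eta_{n-1}\circ(\alpha\times\beta)$ and $f_{n-1}\circ\alpha$ are trivial, $(\alpha\times\beta)(x,y)=\alpha(x)\beta(y)$; (B4) $\alpha(x^{p_1(a)})=\alpha(x)^a$, $\beta(y^{f_1(a)})=\beta(y)^a$ for $a\in\mathcal E_1$. Then $[\mathcal E^*:\eta^*]$: $\mathcal H_n\times\mathcal G_n\xrightarrow{\alpha\times\beta}\mathcal E_{n-1}\xrightarrow{\eta_{n-1}}\cdots\to\mathcal E_1$ is a reduced $n$-crossed complex and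 $p^*:\mathcal E^*\to\mathcal H$ is the projection in degree $n$ and $p$ below. *)

theory Defs
  imports "HOL-Algebra.Algebra"
begin

(* A (reduced) crossed complex with all groups having elements of type 'a.
   grp C k = the group C_k (k >= 1), bd C k = the differential C_k -> C_(k-1) (k >= 2),
   act C k x a = x^a, the right action of a in C_1 on x in C_k (k >= 2). *)
record 'a xcx =
  grp :: "nat \<Rightarrow> 'a monoid"
  bd  :: "nat \<Rightarrow> 'a \<Rightarrow> 'a"
  act :: "nat \<Rightarrow> 'a \<Rightarrow> 'a \<Rightarrow> 'a"

definition rcc :: "nat \<Rightarrow> 'a xcx \<Rightarrow> bool" where
"rcc m C \<longleftrightarrow> 1 \<le> m \<and>
  (\<forall>k\<in>{1..m}. group (grp C k)) \<and>
  (\<forall>k\<in>{3..m}. comm_group (grp C k)) \<and>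
  (\<forall>k\<in>{2..m}. bd C k \<in> hom (grp C k) (grp C (k-1))) \<and>
  (\<forall>k\<in>{2..m}. \<forall>a\<in>carrier (grp C 1). (\<lambda>x. act C k x a) \<in> hom (grp C k) (grp C k)) \<and>
  (\<forall>k\<in>{2..m}. \<forall>x\<in>carrier (grp C k). act C k x \<one>\<^bsub>grp C 1\<^esub> = x) \<and>
  (\<forall>k\<in>{2..m}. \<forall>x\<in>carrier (grp C k). \<forall>a\<in>carrier (grp C 1). \<forall>b\<in>carrier (grp C 1).
      act C k (act C k x a) b = act C k x (a \<otimes>\<^bsub>grp C 1\<^esub> b)) \<and>
  (2 \<le> m \<longrightarrow>
     (\<forall>x\<in>carrier (grp C 2). \<forall>a\<in>carrier (grp C 1).
        bd C 2 (act C 2 x a) = inv\<^bsub>grp C 1\<^esub> a \<otimes>\<^bsub>grp C 1\<^esub> bd C 2 x \<otimes>\<^bsub>grp C 1\<^esub> a) \<and>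
     (\<forall>x\<in>carrier (grp C 2). \<forall>y\<in>carrier (grp C 2).
        act C 2 x (bd C 2 y) = inv\<^bsub>grp C 2\<^esub> y \<otimes>\<^bsub>grp C 2\<^esub> x \<otimes>\<^bsub>grp C 2\<^esub> y)) \<and>
  (\<forall>k\<in>{3..m}. \<forall>x\<in>carrier (grp C k). \<forall>a\<in>carrier (grp C 1).
      bd C k (act C k x a) = act C (k-1) (bd C k x) a) \<and>
  (\<forall>k\<in>{3..m}. \<forall>x\<in>carrier (grp C k). bd C (k-1) (bd C k x) = \<one>\<^bsub>grp C (k-2)\<^esub>) \<and>
  (\<forall>k\<in>{3..m}. \<forall>x\<in>carrier (grp C k). \<forall>y\<in>carrier (grp C 2). act C k x (bd C 2 y) = x)"

definition ccmor :: "nat \<Rightarrow> 'a xcx \<Rightarrow> 'b xcx \<Rightarrow> (nat \<Rightarrow> 'a \<Rightarrow> 'b) \<Rightarrow> bool" where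
"ccmor m C D g \<longleftrightarrow>
  (\<forall>k\<in>{1..m}. g k \<in> hom (grp C k) (grp D k)) \<and>
  (\<forall>k\<in>{2..m}. \<forall>x\<in>carrier (grp C k). g (k-1) (bd C k x) = bd D k (g k x)) \<and>
  (\<forall>k\<in>{2..m}. \<forall>x\<in>carrier (grp C k). \<forall>a\<in>carrier (grp C 1).
      g k (act C k x a) = act D k (g k x) (g 1 a))"

definition cyc :: "'a xcx \<Rightarrow> nat \<Rightarrow> 'a set" where
"cyc C k = (if k = 1 then carrier (grp C 1)
            else {x\<in>carrier (grp C k). bd C k x = \<one>\<^bsub>grp C (k-1)\<^esub>})"

definition bdry :: "nat \<Rightarrow> 'a xcx \<Rightarrow> nat \<Rightarrow> 'a set" where
"bdry m C k = (if k = m then {\<one>\<^bsub>grp C k\<^esub>} else bd C (k+1) ` carrier (grp C (k+1)))"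

definition htpy :: "nat \<Rightarrow> 'a xcx \<Rightarrow> nat \<Rightarrow> 'a set monoid" where
"htpy m C k = ((grp C k)\<lparr>carrier := cyc C k\<rparr>) Mod (bdry m C k)"

definition htpy_map :: "nat \<Rightarrow> 'b xcx \<Rightarrow> (nat \<Rightarrow> 'a \<Rightarrow> 'b) \<Rightarrow> nat \<Rightarrow> 'a set \<Rightarrow> 'b set" where
"htpy_map m D g k S = (\<Union>x\<in>S. bdry m D k #>\<^bsub>grp D k\<^esub> g k x)"

definition weak_eq :: "nat \<Rightarrow> 'a xcx \<Rightarrow> 'b xcx \<Rightarrow> (nat \<Rightarrow> 'a \<Rightarrow> 'b) \<Rightarrow> bool" where
"weak_eq m C D g \<longleftrightarrow> ccmor m C D g \<and>
  (\<forall>k\<in>{1..m}. htpy_map m D g k \<in> iso (htpy m C k) (htpy m D k))"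

definition fibration :: "nat \<Rightarrow> 'a xcx \<Rightarrow> 'b xcx \<Rightarrow> (nat \<Rightarrow> 'a \<Rightarrow> 'b) \<Rightarrow> bool" where
"fibration m C D g \<longleftrightarrow> ccmor m C D g \<and>
  (\<forall>k\<in>{1..m}. g k ` carrier (grp C k) = carrier (grp D k))"

definition triv_fib :: "nat \<Rightarrow> 'a xcx \<Rightarrow> 'b xcx \<Rightarrow> (nat \<Rightarrow> 'a \<Rightarrow> 'b) \<Rightarrow> bool" where
"triv_fib m C D g \<longleftrightarrow> fibration m C D g \<and> weak_eq m C D g"

(* Cofibrancy = left lifting property of (trivial complex -> Q) against all trivial
   fibrations A -> B.  Since HOL cannot quantify over types inside a formula, the
   complexes A and B range over complexes with element types 'a and 'b. *)
definition cofibrant_wrt :: "'a itself \<Rightarrow> 'b itself \<Rightarrow> nat \<Rightarrow> 'q xcx \<Rightarrow> bool" where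
"cofibrant_wrt _ _ m Q \<longleftrightarrow> rcc m Q \<and>
  (\<forall>(A::'a xcx) (B::'b xcx) t g.
     rcc m A \<and> rcc m B \<and> triv_fib m A B t \<and> ccmor m Q B g \<longrightarrow>
     (\<exists>h. ccmor m Q A h \<and> (\<forall>k\<in>{1..m}. \<forall>x\<in>carrier (grp Q k). t k (h k x) = g k x)))"

definition fibprod :: "'e xcx \<Rightarrow> 'h xcx \<Rightarrow> (nat \<Rightarrow> 'e \<Rightarrow> 'h) \<Rightarrow> nat \<Rightarrow> ('e \<times> 'h) set" where
"fibprod E H p k = {(e, h). e \<in> cyc E (k-1) \<and> h \<in> carrier (grp H k) \<and> p (k-1) e = bd H k h}"

(* surjectivity of u_k (for k = 1 the target is H_1 and u_1 = p_1) *)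
definition u_surj :: "'e xcx \<Rightarrow> 'h xcx \<Rightarrow> (nat \<Rightarrow> 'e \<Rightarrow> 'h) \<Rightarrow> nat \<Rightarrow> bool" where
"u_surj E H p k \<longleftrightarrow> (if k = 1 then p 1 ` carrier (grp E 1) = carrier (grp H 1)
   else (\<lambda>x. (bd E k x, p k x)) ` carrier (grp E k) = fibprod E H p k)"

definition butterfly :: "nat \<Rightarrow> 'h xcx \<Rightarrow> 'g xcx \<Rightarrow> 'e xcx \<Rightarrow> (nat \<Rightarrow> 'e \<Rightarrow> 'h) \<Rightarrow>
    (nat \<Rightarrow> 'e \<Rightarrow> 'g) \<Rightarrow> ('h \<Rightarrow> 'e) \<Rightarrow> ('g \<Rightarrow> 'e) \<Rightarrow> bool" where
"butterfly n H G E p f \<alpha> \<beta> \<longleftrightarrow>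
  rcc (n-1) E \<and> ccmor (n-1) E H p \<and> ccmor (n-1) E G f \<and>
  \<alpha> \<in> hom (grp H n) (grp E (n-1)) \<and> \<beta> \<in> hom (grp G n) (grp E (n-1)) \<and>
  (\<forall>x\<in>carrier (grp H n). p (n-1) (\<alpha> x) = bd H n x) \<and>
  (\<forall>y\<in>carrier (grp G n). f (n-1) (\<beta> y) = bd G n y) \<and>
  \<comment> \<open>(B2)\<close>
  (\<forall>k\<in>{1..n-2}. u_surj E H p k) \<and>
  u_surj E H p (n-1) \<and>
  inj_on \<beta> (carrier (grp G n)) \<and>
  \<beta> ` carrier (grp G n) = {x\<in>carrier (grp E (n-1)).
       bd E (n-1) x = \<one>\<^bsub>grp E (n-2)\<^esub> \<and> p (n-1) x = \<one>\<^bsub>grp H (n-1)\<^esub>} \<and>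
  \<comment> \<open>(B3)\<close>
  (\<forall>x\<in>carrier (grp H n). \<forall>y\<in>carrier (grp G n).
      bd E (n-1) (\<alpha> x \<otimes>\<^bsub>grp E (n-1)\<^esub> \<beta> y) = \<one>\<^bsub>grp E (n-2)\<^esub>) \<and>
  (\<forall>x\<in>carrier (grp H n). f (n-1) (\<alpha> x) = \<one>\<^bsub>grp G (n-1)\<^esub>) \<and>
  \<comment> \<open>(B4)\<close>
  (\<forall>a\<in>carrier (grp E 1). \<forall>x\<in>carrier (grp H n). \<alpha> (act H n x (p 1 a)) = act E (n-1) (\<alpha> x) a) \<and>
  (\<forall>a\<in>carrier (grp E 1). \<forall>y\<in>carrier (grp G n). \<beta> (act G n y (f 1 a)) = act E (n-1) (\<beta> y) a)"

(* The n-crossed complex E^*: degree n is H_n x G_n (tagged Inr), degrees < n are E_k (tagged Inl). *)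
definition Estar :: "nat \<Rightarrow> 'h xcx \<Rightarrow> 'g xcx \<Rightarrow> 'e xcx \<Rightarrow> (nat \<Rightarrow> 'e \<Rightarrow> 'h) \<Rightarrow>
    (nat \<Rightarrow> 'e \<Rightarrow> 'g) \<Rightarrow> ('h \<Rightarrow> 'e) \<Rightarrow> ('g \<Rightarrow> 'e) \<Rightarrow> ('e + 'h \<times> 'g) xcx" where
"Estar n H G E p f \<alpha> \<beta> = \<lparr>
   grp = (\<lambda>k. if k = n then
      \<lparr>carrier = Inr ` (carrier (grp H n) \<times> carrier (grp G n)),
       monoid.mult = (\<lambda>a b. Inr (fst (projr a) \<otimes>\<^bsub>grp H n\<^esub> fst (projr b),
                           snd (projr a) \<otimes>\<^bsub>grp G n\<^esub> snd (projr b))),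
       monoid.one = Inr (\<one>\<^bsub>grp H n\<^esub>, \<one>\<^bsub>grp G n\<^esub>)\<rparr>
    else
      \<lparr>carrier = Inl ` carrier (grp E k),
       monoid.mult = (\<lambda>a b. Inl (projl a \<otimes>\<^bsub>grp E k\<^esub> projl b)),
       monoid.one = Inl \<one>\<^bsub>grp E k\<^esub>\<rparr>),
   bd = (\<lambda>k z. if k = n then Inl (\<alpha> (fst (projr z)) \<otimes>\<^bsub>grp E (n-1)\<^esub> \<beta> (snd (projr z)))
               else Inl (bd E k (projl z))),
   act = (\<lambda>k z a. if k = n then Inr (act H n (fst (projr z)) (p 1 (projl a)),
                                     act G n (snd (projr z)) (f 1 (projl a)))
                  else Inl (act E k (projl z) (projl a))) \<rparr>"

definition pstar :: "nat \<Rightarrow> (nat \<Rightarrow> 'e \<Rightarrow> 'h) \<Rightarrow> nat \<Rightarrow> ('e + 'h \<times> 'g) \<Rightarrow> 'h" where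
"pstar n p k z = (if k = n then fst (projr z) else p k (projl z))"

end

theory Submission
  imports Defs
begin

text \<open>The projection \<open>p\<^sup>* : E\<^sup>* \<rightarrow> H\<close> is a trivial fibration. It is onto in every degree by the
  surjectivity of the maps \<open>u\<^sub>k\<close> of (B2), and trivially in degree \<open>n\<close>. It is bijective on \<open>\<pi>\<^sub>k\<close>:
  below degree \<open>n - 1\<close> cycles of \<open>H\<close> lift to cycles of \<open>E\<close> and cycles mapping to boundaries are
  boundaries, again by surjectivity of the \<open>u\<^sub>k\<close>; in degree \<open>n - 1\<close> a cycle \<open>e\<close> with
  \<open>p e = \<partial> x\<close> differs from \<open>\<alpha> x\<close> by an element of \<open>ker \<eta> \<inter> ker p = im \<beta>\<close>, hence is the
  boundary \<open>\<alpha> x \<beta> y\<close>; in degree \<open>n\<close>, injectivity of \<open>\<beta>\<close> does the job. Since \<open>Q\<close> is cofibrant,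
  \<open>q\<close> lifts along \<open>p\<^sup>*\<close> to \<open>l\<close>, and \<open>l\<close> is a weak equivalence by two-out-of-three on homotopy
  groups.\<close>

lemma rcc_group: "rcc m C \<Longrightarrow> 1 \<le> k \<Longrightarrow> k \<le> m \<Longrightarrow> group (grp C k)"
  unfolding rcc_def by auto

lemma rcc_comm_group: "rcc m C \<Longrightarrow> 3 \<le> k \<Longrightarrow> k \<le> m \<Longrightarrow> comm_group (grp C k)"
  unfolding rcc_def by auto

lemma rcc_bd_hom: "rcc m C \<Longrightarrow> 2 \<le> k \<Longrightarrow> k \<le> m \<Longrightarrow> bd C k \<in> hom (grp C k) (grp C (k-1))"
  unfolding rcc_def by auto

lemma rcc_bd_bd: "rcc m C \<Longrightarrow> 3 \<le> k \<Longrightarrow> k \<le> m \<Longrightarrow> x \<in> carrier (grp C k) \<Longrightarrow>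
   bd C (k-1) (bd C k x) = \<one>\<^bsub>grp C (k-2)\<^esub>"
  unfolding rcc_def by auto

lemma rcc_act_hom: "rcc m C \<Longrightarrow> 2 \<le> k \<Longrightarrow> k \<le> m \<Longrightarrow> a \<in> carrier (grp C 1) \<Longrightarrow>
   (\<lambda>x. act C k x a) \<in> hom (grp C k) (grp C k)"
  unfolding rcc_def by auto

lemma rcc_act_one: "rcc m C \<Longrightarrow> 2 \<le> k \<Longrightarrow> k \<le> m \<Longrightarrow> x \<in> carrier (grp C k) \<Longrightarrow>
   act C k x \<one>\<^bsub>grp C 1\<^esub> = x"
  unfolding rcc_def by auto

lemma rcc_act_act: "rcc m C \<Longrightarrow> 2 \<le> k \<Longrightarrow> k \<le> m \<Longrightarrow> x \<in> carrier (grp C k) \<Longrightarrow>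
   a \<in> carrier (grp C 1) \<Longrightarrow> b \<in> carrier (grp C 1) \<Longrightarrow>
   act C k (act C k x a) b = act C k x (a \<otimes>\<^bsub>grp C 1\<^esub> b)"
  unfolding rcc_def by auto

lemma rcc_bd2_act: "rcc m C \<Longrightarrow> 2 \<le> m \<Longrightarrow> x \<in> carrier (grp C 2) \<Longrightarrow> a \<in> carrier (grp C 1) \<Longrightarrow>
   bd C 2 (act C 2 x a) = inv\<^bsub>grp C 1\<^esub> a \<otimes>\<^bsub>grp C 1\<^esub> bd C 2 x \<otimes>\<^bsub>grp C 1\<^esub> a"
  unfolding rcc_def by auto

lemma rcc_act_bd2: "rcc m C \<Longrightarrow> 2 \<le> m \<Longrightarrow> x \<in> carrier (grp C 2) \<Longrightarrow> y \<in> carrier (grp C 2) \<Longrightarrow>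
   act C 2 x (bd C 2 y) = inv\<^bsub>grp C 2\<^esub> y \<otimes>\<^bsub>grp C 2\<^esub> x \<otimes>\<^bsub>grp C 2\<^esub> y"
  unfolding rcc_def by auto

lemma rcc_bd_act: "rcc m C \<Longrightarrow> 3 \<le> k \<Longrightarrow> k \<le> m \<Longrightarrow> x \<in> carrier (grp C k) \<Longrightarrow> a \<in> carrier (grp C 1) \<Longrightarrow>
   bd C k (act C k x a) = act C (k-1) (bd C k x) a"
  unfolding rcc_def by auto

lemma rcc_act_bd2_trivial: "rcc m C \<Longrightarrow> 3 \<le> k \<Longrightarrow> k \<le> m \<Longrightarrow> x \<in> carrier (grp C k) \<Longrightarrow>
   y \<in> carrier (grp C 2) \<Longrightarrow> act C k x (bd C 2 y) = x"
  unfolding rcc_def by auto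

lemma ccmor_hom: "ccmor m C D g \<Longrightarrow> 1 \<le> k \<Longrightarrow> k \<le> m \<Longrightarrow> g k \<in> hom (grp C k) (grp D k)"
  unfolding ccmor_def by auto

lemma ccmor_bd: "ccmor m C D g \<Longrightarrow> 2 \<le> k \<Longrightarrow> k \<le> m \<Longrightarrow> x \<in> carrier (grp C k) \<Longrightarrow>
   g (k-1) (bd C k x) = bd D k (g k x)"
  unfolding ccmor_def by auto

lemma ccmor_act: "ccmor m C D g \<Longrightarrow> 2 \<le> k \<Longrightarrow> k \<le> m \<Longrightarrow> x \<in> carrier (grp C k) \<Longrightarrow>
   a \<in> carrier (grp C 1) \<Longrightarrow> g k (act C k x a) = act D k (g k x) (g 1 a)"
  unfolding ccmor_def by auto

lemma cyc_subgroup: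
  assumes "rcc m C" "1 \<le> k" "k \<le> m" shows "subgroup (cyc C k) (grp C k)"
proof (cases "k = 1")
  case True
  then show ?thesis using rcc_group[OF assms] by (simp add: cyc_def group.subgroup_self)
next
  case False
  then have k2: "2 \<le> k" using assms by auto
  have "group_hom (grp C k) (grp C (k-1)) (bd C k)"
    using rcc_group[OF assms(1)] rcc_bd_hom[OF assms(1) k2 assms(3)] assms k2
    by (simp add: group_hom_def group_hom_axioms_def)
  moreover have "cyc C k = kernel (grp C k) (grp C (k-1)) (bd C k)"
    using k2 unfolding cyc_def kernel_def by auto
  ultimately show ?thesis using group_hom.subgroup_kernel by metis
qed

lemma cyc_carrier: "rcc m C \<Longrightarrow> 1 \<le> k \<Longrightarrow> k \<le> m \<Longrightarrow> y \<in> cyc C k \<Longrightarrow> y \<in> carrier (grp C k)"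
  using cyc_subgroup subgroup.subset by blast

lemma bdry_subgroup:
  assumes "rcc m C" "1 \<le> k" "k \<le> m"
  shows "subgroup (bdry m C k) (grp C k)"
proof (cases "k = m")
  case True
  then show ?thesis using rcc_group[OF assms] by (simp add: bdry_def group.triv_subgroup)
next
  case False
  have "group_hom (grp C (k+1)) (grp C k) (bd C (k+1))"
    using rcc_group[OF assms(1)] rcc_bd_hom[OF assms(1), of "k+1"] assms False
    by (simp add: group_hom_def group_hom_axioms_def)
  then show ?thesis
    using False group_hom.img_is_subgroup unfolding bdry_def by fastforce
qed

lemma bdry_subset_cyc:
  assumes "rcc m C" "1 \<le> k" "k \<le> m"
  shows "bdry m C k \<subseteq> cyc C k"
proof
  fix x assume x: "x \<in> bdry m C k"
  have xc: "x \<in> carrier (grp C k)" using x bdry_subgroup[OF assms] subgroup.subset by blast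
  show "x \<in> cyc C k"
  proof (cases "k = 1 \<or> k = m")
    case True
    then show ?thesis
      using x xc subgroup.one_closed[OF cyc_subgroup[OF assms]] by (auto simp: cyc_def bdry_def)
  next
    case False
    then obtain c where "c \<in> carrier (grp C (k+1))" "x = bd C (k+1) c"
      using x unfolding bdry_def by auto
    then have "bd C k x = \<one>\<^bsub>grp C (k-1)\<^esub>"
      using rcc_bd_bd[OF assms(1), of "k+1" c] False assms by auto
    then show ?thesis using xc False by (simp add: cyc_def)
  qed
qed

text \<open>Cycles are central: in degree 2 by the Peiffer identity, since they act trivially;
  above degree 2 because the groups are abelian.\<close>

lemma cyc_central:
  assumes "rcc m C" "2 \<le> k" "k \<le> m" "x \<in> carrier (grp C k)" "y \<in> cyc C k"
  shows "x \<otimes>\<^bsub>grp C k\<^esub> y = y \<otimes>\<^bsub>grp C k\<^esub> x"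
proof -
  have yc: "y \<in> carrier (grp C k)" using cyc_carrier[OF assms(1) _ assms(3,5)] assms(2) by simp
  interpret G: group "grp C k" using rcc_group[OF assms(1) _ assms(3)] assms(2) by simp
  show ?thesis
  proof (cases "k = 2")
    case False
    then have "comm_group (grp C k)" using rcc_comm_group[OF assms(1) _ assms(3)] assms(2) by simp
    then show ?thesis using comm_monoid.m_comm[OF comm_group.axioms(1)] assms(4) yc by metis
  next
    case True
    have m2: "2 \<le> m" using assms by simp
    have "bd C 2 y = \<one>\<^bsub>grp C 1\<^esub>" using assms True by (simp add: cyc_def)
    then have "x = inv\<^bsub>grp C 2\<^esub> y \<otimes>\<^bsub>grp C 2\<^esub> x \<otimes>\<^bsub>grp C 2\<^esub> y"
      using rcc_act_bd2[OF assms(1) m2, of x y] rcc_act_one[OF assms(1) _ m2, of x] assms(4) yc True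
      by simp
    then have "x = inv\<^bsub>grp C k\<^esub> y \<otimes>\<^bsub>grp C k\<^esub> x \<otimes>\<^bsub>grp C k\<^esub> y" using True by simp
    then have "y \<otimes>\<^bsub>grp C k\<^esub> x = y \<otimes>\<^bsub>grp C k\<^esub> (inv\<^bsub>grp C k\<^esub> y \<otimes>\<^bsub>grp C k\<^esub> x \<otimes>\<^bsub>grp C k\<^esub> y)"
      by simp
    also have "\<dots> = x \<otimes>\<^bsub>grp C k\<^esub> y" using yc assms(4) by (simp add: G.m_assoc[symmetric])
    finally show ?thesis by simp
  qed
qed

lemma r_coset_carrier_update: "H #>\<^bsub>G\<lparr>carrier := Z\<rparr>\<^esub> a = H #>\<^bsub>G\<^esub> a"
  by (simp add: r_coset_def)

lemma set_mult_carrier_update: "H <#>\<^bsub>G\<lparr>carrier := Z\<rparr>\<^esub> K = H <#>\<^bsub>G\<^esub> K"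
  by (simp add: set_mult_def)

lemma bdry_normal:
  assumes "rcc m C" "1 \<le> k" "k \<le> m"
  shows "normal (bdry m C k) ((grp C k)\<lparr>carrier := cyc C k\<rparr>)"
proof -
  let ?G = "grp C k" let ?B = "bdry m C k"
  interpret G: group ?G using rcc_group assms by auto
  have sZ: "subgroup (cyc C k) ?G" using cyc_subgroup assms by auto
  have sB: "subgroup ?B ?G" using bdry_subgroup[OF assms] .
  have conj: "x \<otimes>\<^bsub>?G\<^esub> h \<otimes>\<^bsub>?G\<^esub> inv\<^bsub>?G\<^esub> x \<in> ?B" if x: "x \<in> cyc C k" and h: "h \<in> ?B" for x h
  proof -
    have xc: "x \<in> carrier ?G" using x sZ subgroup.subset by blast
    have hc: "h \<in> carrier ?G" using h sB subgroup.subset by blast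
    consider "k = m" | "k = 1" "k \<noteq> m" | "k \<noteq> 1" using assms by blast
    then show ?thesis
    proof cases
      case 1
      then have "h = \<one>\<^bsub>?G\<^esub>" using h by (simp add: bdry_def)
      then show ?thesis using xc subgroup.one_closed[OF sB] by simp
    next
      case 2
      then obtain c where c: "c \<in> carrier (grp C 2)" "h = bd C 2 c"
        using h by (auto simp: bdry_def numeral_2_eq_2)
      have ix: "inv\<^bsub>grp C 1\<^esub> x \<in> carrier (grp C 1)" using G.inv_closed[OF xc] 2 by simp
      have m2: "2 \<le> m" using 2 assms by auto
      \<comment> \<open>conjugation in degree 1 is realised by the action on degree 2\<close>
      have "act C 2 c (inv\<^bsub>grp C 1\<^esub> x) \<in> carrier (grp C 2)"
        using hom_in_carrier[OF rcc_act_hom[OF assms(1) _ m2 ix] c(1)] by simp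
      moreover have "bd C 2 (act C 2 c (inv\<^bsub>grp C 1\<^esub> x)) = x \<otimes>\<^bsub>?G\<^esub> h \<otimes>\<^bsub>?G\<^esub> inv\<^bsub>?G\<^esub> x"
        using rcc_bd2_act[OF assms(1) m2 c(1) ix] G.inv_inv[OF xc] c 2 by simp
      ultimately show ?thesis using 2 by (simp add: bdry_def numeral_2_eq_2[symmetric]) (metis image_eqI)
    next
      case 3
      then have "x \<otimes>\<^bsub>?G\<^esub> h = h \<otimes>\<^bsub>?G\<^esub> x"
        using cyc_central[OF assms(1), of k h x] assms x hc by auto
      then show ?thesis using xc hc h by (simp add: G.m_assoc)
    qed
  qed
  have "subgroup ?B (?G\<lparr>carrier := cyc C k\<rparr>)"
    using G.subgroup_incl[OF sB sZ bdry_subset_cyc[OF assms]] .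
  then show ?thesis
    using group.normal_inv_iff[OF subgroup.subgroup_is_group[OF sZ G.is_group]] conj sZ by simp
qed

lemma htpy_carrier: "carrier (htpy m C k) = (\<lambda>y. bdry m C k #>\<^bsub>grp C k\<^esub> y) ` cyc C k"
  by (auto simp: htpy_def FactGroup_def RCOSETS_def r_coset_carrier_update)

lemma htpy_mult: "S \<otimes>\<^bsub>htpy m C k\<^esub> T = S <#>\<^bsub>grp C k\<^esub> T"
  by (simp add: htpy_def FactGroup_def set_mult_carrier_update)

lemma htpy_rcos_mult:
  assumes "rcc m C" "1 \<le> k" "k \<le> m" "y \<in> cyc C k" "z \<in> cyc C k"
  shows "(bdry m C k #>\<^bsub>grp C k\<^esub> y) <#>\<^bsub>grp C k\<^esub> (bdry m C k #>\<^bsub>grp C k\<^esub> z)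
         = bdry m C k #>\<^bsub>grp C k\<^esub> (y \<otimes>\<^bsub>grp C k\<^esub> z)"
  using normal.rcos_sum[OF bdry_normal[OF assms(1-3)], of y z] assms(4,5)
  by (simp add: r_coset_carrier_update set_mult_carrier_update)

lemma (in group) rcos_eq_iff_mult_inv:
  assumes "subgroup B G" "x \<in> carrier G" "y \<in> carrier G"
  shows "B #> x = B #> y \<longleftrightarrow> x \<otimes> inv y \<in> B"
proof
  assume "B #> x = B #> y"
  then show "x \<otimes> inv y \<in> B"
    using rcos_self[OF assms(2,1)] subgroup.rcos_module_imp[OF assms(1) is_group assms(3)] by simp
next
  assume "x \<otimes> inv y \<in> B"
  then show "B #> x = B #> y"
    using subgroup.rcos_module_rev[OF assms(1) is_group assms(3,2)] repr_independence[OF _ assms(3,1)]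
    by simp
qed

locale xcx_morphism =
  fixes m :: nat and C :: "'a xcx" and D :: "'b xcx" and g :: "nat \<Rightarrow> 'a \<Rightarrow> 'b"
  assumes src: "rcc m C" and tgt: "rcc m D" and mor: "ccmor m C D g"
begin

lemma group_hom_degree: "1 \<le> k \<Longrightarrow> k \<le> m \<Longrightarrow> group_hom (grp C k) (grp D k) (g k)"
  using rcc_group[OF src] rcc_group[OF tgt] ccmor_hom[OF mor]
  by (simp add: group_hom_def group_hom_axioms_def)

lemma map_cyc: "1 \<le> k \<Longrightarrow> k \<le> m \<Longrightarrow> y \<in> cyc C k \<Longrightarrow> g k y \<in> cyc D k"
proof (cases "k = 1")
  case True
  assume "1 \<le> k" "k \<le> m" "y \<in> cyc C k"
  then show ?thesis using True hom_in_carrier[OF ccmor_hom[OF mor]] by (simp add: cyc_def)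
next
  case False
  assume k: "1 \<le> k" "k \<le> m" and y: "y \<in> cyc C k"
  then have yc: "y \<in> carrier (grp C k)" and b: "bd C k y = \<one>\<^bsub>grp C (k-1)\<^esub>"
    using False by (auto simp: cyc_def)
  have k2: "2 \<le> k" using False k by auto
  have "g (k-1) \<one>\<^bsub>grp C (k-1)\<^esub> = \<one>\<^bsub>grp D (k-1)\<^esub>"
    using group_hom.hom_one[OF group_hom_degree, of "k-1"] k2 k by auto
  then show ?thesis
    using ccmor_bd[OF mor k2 k(2) yc] b hom_in_carrier[OF ccmor_hom[OF mor k] yc] False
    by (simp add: cyc_def)
qed

lemma map_bdry: "1 \<le> k \<Longrightarrow> k \<le> m \<Longrightarrow> x \<in> bdry m C k \<Longrightarrow> g k x \<in> bdry m D k"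
proof (cases "k = m")
  case True
  assume "1 \<le> k" "k \<le> m" "x \<in> bdry m C k"
  then show ?thesis using True group_hom.hom_one[OF group_hom_degree] by (simp add: bdry_def)
next
  case False
  assume k: "1 \<le> k" "k \<le> m" and "x \<in> bdry m C k"
  then obtain c where c: "c \<in> carrier (grp C (k+1))" "x = bd C (k+1) c"
    using False by (auto simp: bdry_def)
  have "g k x = bd D (k+1) (g (k+1) c)" using ccmor_bd[OF mor, of "k+1" c] c False k by simp
  moreover have "g (k+1) c \<in> carrier (grp D (k+1))"
    using hom_in_carrier[OF ccmor_hom[OF mor, of "k+1"] c(1)] False k by simp
  ultimately show ?thesis using False by (simp add: bdry_def)
qed

lemma htpy_map_rcos:
  assumes k: "1 \<le> k" "k \<le> m" and y: "y \<in> cyc C k"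
  shows "htpy_map m D g k (bdry m C k #>\<^bsub>grp C k\<^esub> y) = bdry m D k #>\<^bsub>grp D k\<^esub> g k y"
proof -
  interpret gk: group_hom "grp C k" "grp D k" "g k" using group_hom_degree[OF k] .
  have sBC: "subgroup (bdry m C k) (grp C k)" using bdry_subgroup[OF src k] .
  have sBD: "subgroup (bdry m D k) (grp D k)" using bdry_subgroup[OF tgt k] .
  have yc: "y \<in> carrier (grp C k)" using cyc_carrier[OF src k y] .
  have eq: "bdry m D k #>\<^bsub>grp D k\<^esub> g k x = bdry m D k #>\<^bsub>grp D k\<^esub> g k y"
    if x: "x \<in> bdry m C k #>\<^bsub>grp C k\<^esub> y" for x
  proof -
    obtain b where b: "b \<in> bdry m C k" "x = b \<otimes>\<^bsub>grp C k\<^esub> y" using x unfolding r_coset_def by auto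
    have bc: "b \<in> carrier (grp C k)" using b sBC subgroup.subset by blast
    have "bdry m D k #>\<^bsub>grp D k\<^esub> g k x = (bdry m D k #>\<^bsub>grp D k\<^esub> g k b) #>\<^bsub>grp D k\<^esub> g k y"
      using b(2) bc yc gk.H.coset_mult_assoc[OF subgroup.subset[OF sBD]] by simp
    also have "\<dots> = bdry m D k #>\<^bsub>grp D k\<^esub> g k y"
      using gk.H.coset_join2[OF _ sBD map_bdry[OF k b(1)]] bc by simp
    finally show ?thesis .
  qed
  have "y \<in> bdry m C k #>\<^bsub>grp C k\<^esub> y" using gk.G.rcos_self[OF yc sBC] .
  then show ?thesis unfolding htpy_map_def using eq by blast
qed

lemma htpy_map_hom:
  assumes k: "1 \<le> k" "k \<le> m"
  shows "htpy_map m D g k \<in> hom (htpy m C k) (htpy m D k)"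
proof (rule homI)
  fix S assume "S \<in> carrier (htpy m C k)"
  then obtain y where "y \<in> cyc C k" "S = bdry m C k #>\<^bsub>grp C k\<^esub> y" by (auto simp: htpy_carrier)
  then show "htpy_map m D g k S \<in> carrier (htpy m D k)"
    using htpy_map_rcos[OF k] map_cyc[OF k] unfolding htpy_carrier by blast
next
  fix S T assume "S \<in> carrier (htpy m C k)" "T \<in> carrier (htpy m C k)"
  then obtain y z where y: "y \<in> cyc C k" "S = bdry m C k #>\<^bsub>grp C k\<^esub> y"
    and z: "z \<in> cyc C k" "T = bdry m C k #>\<^bsub>grp C k\<^esub> z" by (auto simp: htpy_carrier)
  have yz: "y \<otimes>\<^bsub>grp C k\<^esub> z \<in> cyc C k" using subgroup.m_closed[OF cyc_subgroup[OF src k] y(1) z(1)] .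
  have "htpy_map m D g k (S \<otimes>\<^bsub>htpy m C k\<^esub> T) = bdry m D k #>\<^bsub>grp D k\<^esub> g k (y \<otimes>\<^bsub>grp C k\<^esub> z)"
    using y(2) z(2) htpy_rcos_mult[OF src k y(1) z(1)] htpy_map_rcos[OF k yz] by (simp add: htpy_mult)
  also have "\<dots> = bdry m D k #>\<^bsub>grp D k\<^esub> (g k y \<otimes>\<^bsub>grp D k\<^esub> g k z)"
    using group_hom.hom_mult[OF group_hom_degree[OF k] cyc_carrier[OF src k y(1)] cyc_carrier[OF src k z(1)]]
    by simp
  also have "\<dots> = htpy_map m D g k S \<otimes>\<^bsub>htpy m D k\<^esub> htpy_map m D g k T"
    using htpy_rcos_mult[OF tgt k map_cyc[OF k y(1)] map_cyc[OF k z(1)]]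
      htpy_map_rcos[OF k y(1)] htpy_map_rcos[OF k z(1)] y(2) z(2) by (simp add: htpy_mult)
  finally show "htpy_map m D g k (S \<otimes>\<^bsub>htpy m C k\<^esub> T) =
        htpy_map m D g k S \<otimes>\<^bsub>htpy m D k\<^esub> htpy_map m D g k T" .
qed

lemma htpy_map_isoI:
  assumes k: "1 \<le> k" "k \<le> m"
    and surj: "\<forall>w\<in>cyc D k. \<exists>x\<in>cyc C k. g k x = w"
    and reflects_bdry: "\<forall>z\<in>cyc C k. g k z \<in> bdry m D k \<longrightarrow> z \<in> bdry m C k"
  shows "htpy_map m D g k \<in> iso (htpy m C k) (htpy m D k)"
proof -
  interpret gk: group_hom "grp C k" "grp D k" "g k" using group_hom_degree[OF k] .
  have sBC: "subgroup (bdry m C k) (grp C k)" using bdry_subgroup[OF src k] .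
  have sBD: "subgroup (bdry m D k) (grp D k)" using bdry_subgroup[OF tgt k] .
  have inj: "inj_on (htpy_map m D g k) (carrier (htpy m C k))"
  proof (rule inj_onI)
    fix S T assume "S \<in> carrier (htpy m C k)" "T \<in> carrier (htpy m C k)"
      and e: "htpy_map m D g k S = htpy_map m D g k T"
    then obtain y z where y: "y \<in> cyc C k" "S = bdry m C k #>\<^bsub>grp C k\<^esub> y"
      and z: "z \<in> cyc C k" "T = bdry m C k #>\<^bsub>grp C k\<^esub> z" by (auto simp: htpy_carrier)
    have yc: "y \<in> carrier (grp C k)" and zc: "z \<in> carrier (grp C k)"
      using cyc_carrier[OF src k] y(1) z(1) by auto
    have "bdry m D k #>\<^bsub>grp D k\<^esub> g k y = bdry m D k #>\<^bsub>grp D k\<^esub> g k z"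
      using e y z htpy_map_rcos[OF k] by simp
    then have "g k (y \<otimes>\<^bsub>grp C k\<^esub> inv\<^bsub>grp C k\<^esub> z) \<in> bdry m D k"
      using gk.H.rcos_eq_iff_mult_inv[OF sBD] yc zc by simp
    moreover have "y \<otimes>\<^bsub>grp C k\<^esub> inv\<^bsub>grp C k\<^esub> z \<in> cyc C k"
      using cyc_subgroup[OF src k] y(1) z(1) by (simp add: subgroup.m_closed subgroup.m_inv_closed)
    ultimately have "y \<otimes>\<^bsub>grp C k\<^esub> inv\<^bsub>grp C k\<^esub> z \<in> bdry m C k" using reflects_bdry by blast
    then show "S = T" using gk.G.rcos_eq_iff_mult_inv[OF sBC yc zc] y z by simp
  qed
  have "carrier (htpy m D k) \<subseteq> htpy_map m D g k ` carrier (htpy m C k)"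
  proof
    fix T assume "T \<in> carrier (htpy m D k)"
    then obtain w where w: "w \<in> cyc D k" "T = bdry m D k #>\<^bsub>grp D k\<^esub> w" by (auto simp: htpy_carrier)
    obtain x where x: "x \<in> cyc C k" "g k x = w" using surj w(1) by blast
    have "T = htpy_map m D g k (bdry m C k #>\<^bsub>grp C k\<^esub> x)" using htpy_map_rcos[OF k x(1)] x w by simp
    then show "T \<in> htpy_map m D g k ` carrier (htpy m C k)" using x by (simp add: htpy_carrier)
  qed
  then show ?thesis
    using htpy_map_hom[OF k] hom_carrier[OF htpy_map_hom[OF k]] inj
    by (auto simp: iso_def bij_betw_def)
qed

end

lemma htpy_map_comp:
  assumes "xcx_morphism m Q E h" "xcx_morphism m E H p" "xcx_morphism m Q H q"
    and k: "1 \<le> k" "k \<le> m"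
    and comp: "\<forall>x\<in>carrier (grp Q k). p k (h k x) = q k x"
    and S: "S \<in> carrier (htpy m Q k)"
  shows "htpy_map m H q k S = htpy_map m H p k (htpy_map m E h k S)"
proof -
  obtain y where y: "y \<in> cyc Q k" "S = bdry m Q k #>\<^bsub>grp Q k\<^esub> y" using S by (auto simp: htpy_carrier)
  show ?thesis
    using y comp cyc_carrier[OF xcx_morphism.src[OF assms(1)] k y(1)]
      xcx_morphism.htpy_map_rcos[OF assms(1) k y(1)] xcx_morphism.htpy_map_rcos[OF assms(3) k y(1)]
      xcx_morphism.htpy_map_rcos[OF assms(2) k xcx_morphism.map_cyc[OF assms(1) k y(1)]]
    by simp
qed

lemma iso_of_comp_iso:
  assumes F: "F \<in> hom A B" and P: "P \<in> iso B C" and PF: "PF \<in> iso A C"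
    and comp: "\<forall>S\<in>carrier A. P (F S) = PF S"
  shows "F \<in> iso A B"
proof -
  have FA: "F ` carrier A \<subseteq> carrier B" using hom_carrier[OF F] .
  have bPF: "bij_betw PF (carrier A) (carrier C)" and bP: "bij_betw P (carrier B) (carrier C)"
    using PF P by (auto simp: iso_def)
  have inj: "inj_on F (carrier A)"
  proof (rule inj_onI)
    fix S T assume "S \<in> carrier A" "T \<in> carrier A" "F S = F T"
    then show "S = T" using comp bPF by (metis bij_betw_def inj_onD)
  qed
  have "carrier B \<subseteq> F ` carrier A"
  proof
    fix T assume T: "T \<in> carrier B"
    then have "P T \<in> PF ` carrier A" using bP bPF by (auto simp: bij_betw_def)
    then obtain S where S: "S \<in> carrier A" "P (F S) = P T" using comp by force
    then have "F S = T" using bP T FA by (auto simp: bij_betw_def inj_on_def)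
    then show "T \<in> F ` carrier A" using S by blast
  qed
  then show ?thesis using F inj FA by (auto simp: iso_def bij_betw_def)
qed

lemma weak_eq_xcx_morphism: "weak_eq m C D g \<Longrightarrow> rcc m C \<Longrightarrow> rcc m D \<Longrightarrow> xcx_morphism m C D g"
  by (simp add: weak_eq_def xcx_morphism_def)

lemma weak_eq_of_comp:
  assumes "rcc m Q" "rcc m E" "rcc m H"
    and l: "ccmor m Q E l" and p: "weak_eq m E H p" and q: "weak_eq m Q H q"
    and comp: "\<forall>k\<in>{1..m}. \<forall>x\<in>carrier (grp Q k). p k (l k x) = q k x"
  shows "weak_eq m Q E l"
  unfolding weak_eq_def
proof (intro conjI ballI l)
  fix k assume k: "k \<in> {1..m}"
  have ml: "xcx_morphism m Q E l" using assms(1,2) l by (simp add: xcx_morphism_def)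
  show "htpy_map m E l k \<in> iso (htpy m Q k) (htpy m E k)"
  proof (rule iso_of_comp_iso)
    show "htpy_map m E l k \<in> hom (htpy m Q k) (htpy m E k)"
      using xcx_morphism.htpy_map_hom[OF ml] k by simp
    show "htpy_map m H p k \<in> iso (htpy m E k) (htpy m H k)"
      and "htpy_map m H q k \<in> iso (htpy m Q k) (htpy m H k)"
      using p q k unfolding weak_eq_def by auto
    show "\<forall>S\<in>carrier (htpy m Q k). htpy_map m H p k (htpy_map m E l k S) = htpy_map m H q k S"
      using htpy_map_comp[OF ml weak_eq_xcx_morphism[OF p] weak_eq_xcx_morphism[OF q]] comp k assms(1-3)
      by simp
  qed
qed

definition Inl_monoid :: "'a monoid \<Rightarrow> ('a + 'b) monoid" where
  "Inl_monoid A = \<lparr>carrier = Inl ` carrier A,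
     monoid.mult = (\<lambda>a b. Inl (projl a \<otimes>\<^bsub>A\<^esub> projl b)), monoid.one = Inl \<one>\<^bsub>A\<^esub>\<rparr>"

definition Inr_prod_monoid :: "'b monoid \<Rightarrow> 'c monoid \<Rightarrow> ('a + 'b \<times> 'c) monoid" where
  "Inr_prod_monoid A B = \<lparr>carrier = Inr ` (carrier A \<times> carrier B),
     monoid.mult = (\<lambda>a b. Inr (fst (projr a) \<otimes>\<^bsub>A\<^esub> fst (projr b), snd (projr a) \<otimes>\<^bsub>B\<^esub> snd (projr b))),
     monoid.one = Inr (\<one>\<^bsub>A\<^esub>, \<one>\<^bsub>B\<^esub>)\<rparr>"

lemma Inl_monoid_carrier [simp]: "carrier (Inl_monoid A) = Inl ` carrier A"
  and Inl_monoid_mult [simp]: "x \<otimes>\<^bsub>Inl_monoid A\<^esub> y = Inl (projl x \<otimes>\<^bsub>A\<^esub> projl y)"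
  and Inl_monoid_one [simp]: "\<one>\<^bsub>Inl_monoid A\<^esub> = Inl \<one>\<^bsub>A\<^esub>"
  by (simp_all add: Inl_monoid_def)

lemma Inr_prod_monoid_carrier [simp]: "carrier (Inr_prod_monoid A B) = Inr ` (carrier A \<times> carrier B)"
  and Inr_prod_monoid_mult [simp]: "x \<otimes>\<^bsub>Inr_prod_monoid A B\<^esub> y =
    Inr (fst (projr x) \<otimes>\<^bsub>A\<^esub> fst (projr y), snd (projr x) \<otimes>\<^bsub>B\<^esub> snd (projr y))"
  and Inr_prod_monoid_one [simp]: "\<one>\<^bsub>Inr_prod_monoid A B\<^esub> = Inr (\<one>\<^bsub>A\<^esub>, \<one>\<^bsub>B\<^esub>)"
  by (simp_all add: Inr_prod_monoid_def)

lemma Inl_monoid_group: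
  assumes "group A" shows "group (Inl_monoid A :: ('a + 'b) monoid)"
proof -
  interpret A: group A by fact
  show ?thesis
  proof (rule groupI)
    fix x assume "x \<in> carrier (Inl_monoid A :: ('a + 'b) monoid)"
    then show "\<exists>y\<in>carrier (Inl_monoid A). y \<otimes>\<^bsub>Inl_monoid A\<^esub> x = \<one>\<^bsub>Inl_monoid A :: ('a + 'b) monoid\<^esub>"
      by (auto intro!: bexI[of _ "Inl (inv\<^bsub>A\<^esub> (projl x))"])
  qed (auto simp: A.m_assoc)
qed

lemma Inl_monoid_comm_group:
  assumes "comm_group A" shows "comm_group (Inl_monoid A :: ('a + 'b) monoid)"
proof -
  interpret A: comm_group A by fact
  show ?thesis
    using Inl_monoid_group[OF A.is_group] by (rule group.group_comm_groupI) (auto simp: A.m_comm)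
qed

lemma Inl_monoid_inv:
  assumes "group A" "a \<in> carrier A"
  shows "inv\<^bsub>(Inl_monoid A :: ('a + 'b) monoid)\<^esub> (Inl a) = Inl (inv\<^bsub>A\<^esub> a)"
proof -
  interpret A: group A by fact
  show ?thesis
    using group.inv_equality[OF Inl_monoid_group[OF assms(1)], of "Inl (inv\<^bsub>A\<^esub> a)" "Inl a"] assms(2)
    by simp
qed

lemma Inr_prod_monoid_group:
  assumes "group A" "group B" shows "group (Inr_prod_monoid A B :: ('a + 'b \<times> 'c) monoid)"
proof -
  interpret A: group A by fact
  interpret B: group B by fact
  show ?thesis
  proof (rule groupI)
    fix x assume "x \<in> carrier (Inr_prod_monoid A B :: ('a + 'b \<times> 'c) monoid)"
    then show "\<exists>y\<in>carrier (Inr_prod_monoid A B). y \<otimes>\<^bsub>Inr_prod_monoid A B\<^esub> x =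
        \<one>\<^bsub>Inr_prod_monoid A B :: ('a + 'b \<times> 'c) monoid\<^esub>"
      by (auto intro!: bexI[of _ "Inr (inv\<^bsub>A\<^esub> fst (projr x), inv\<^bsub>B\<^esub> snd (projr x))"])
  qed (auto simp: A.m_assoc B.m_assoc)
qed

lemma Inr_prod_monoid_comm_group:
  assumes "comm_group A" "comm_group B"
  shows "comm_group (Inr_prod_monoid A B :: ('a + 'b \<times> 'c) monoid)"
proof -
  interpret A: comm_group A by fact
  interpret B: comm_group B by fact
  show ?thesis
    using Inr_prod_monoid_group[OF A.is_group B.is_group]
    by (rule group.group_comm_groupI) (auto simp: A.m_comm B.m_comm)
qed

lemma Inl_monoid_hom_map:
  "h \<in> hom A B \<Longrightarrow>
   (\<lambda>z. Inl (h (projl z))) \<in> hom (Inl_monoid A :: ('a + 'c) monoid) (Inl_monoid B :: ('b + 'd) monoid)"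
  by (rule homI) (auto simp: hom_in_carrier hom_mult)

lemma Inr_prod_monoid_hom_map:
  "h \<in> hom A A' \<Longrightarrow> g \<in> hom B B' \<Longrightarrow>
   (\<lambda>z. Inr (h (fst (projr z)), g (snd (projr z))))
     \<in> hom (Inr_prod_monoid A B :: ('x + 'a \<times> 'b) monoid) (Inr_prod_monoid A' B' :: ('y + 'c \<times> 'd) monoid)"
  by (rule homI) (auto simp: hom_in_carrier hom_mult)

lemma Inl_monoid_hom_projl:
  "h \<in> hom A B \<Longrightarrow> (\<lambda>z. h (projl z)) \<in> hom (Inl_monoid A :: ('a + 'c) monoid) B"
  by (rule homI) (auto simp: hom_in_carrier hom_mult)

lemma Inr_prod_monoid_hom_fst:
  "(\<lambda>z. fst (projr z)) \<in> hom (Inr_prod_monoid A B :: ('x + 'a \<times> 'b) monoid) A"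
  by (rule homI) auto

lemma Inr_prod_monoid_hom_commuting_mult:
  assumes K: "group K" and \<alpha>: "\<alpha> \<in> hom A K" and \<beta>: "\<beta> \<in> hom B K"
    and commute: "\<And>x y. x \<in> carrier A \<Longrightarrow> y \<in> carrier B \<Longrightarrow> \<beta> y \<otimes>\<^bsub>K\<^esub> \<alpha> x = \<alpha> x \<otimes>\<^bsub>K\<^esub> \<beta> y"
  shows "(\<lambda>z. Inl (\<alpha> (fst (projr z)) \<otimes>\<^bsub>K\<^esub> \<beta> (snd (projr z))))
           \<in> hom (Inr_prod_monoid A B :: ('x + 'a \<times> 'b) monoid) (Inl_monoid K :: ('k + 'y) monoid)"
proof (rule homI)
  interpret K: group K by fact
  fix z assume "z \<in> carrier (Inr_prod_monoid A B :: ('x + 'a \<times> 'b) monoid)"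
  then show "Inl (\<alpha> (fst (projr z)) \<otimes>\<^bsub>K\<^esub> \<beta> (snd (projr z))) \<in> carrier (Inl_monoid K :: ('k + 'y) monoid)"
    using hom_in_carrier[OF \<alpha>] hom_in_carrier[OF \<beta>] by auto
next
  interpret K: group K by fact
  fix z w assume "z \<in> carrier (Inr_prod_monoid A B :: ('x + 'a \<times> 'b) monoid)"
    and "w \<in> carrier (Inr_prod_monoid A B :: ('x + 'a \<times> 'b) monoid)"
  then obtain x1 y1 x2 y2 where xy: "x1 \<in> carrier A" "y1 \<in> carrier B" "z = Inr (x1, y1)"
    "x2 \<in> carrier A" "y2 \<in> carrier B" "w = Inr (x2, y2)" by auto
  have "\<alpha> (x1 \<otimes>\<^bsub>A\<^esub> x2) \<otimes>\<^bsub>K\<^esub> \<beta> (y1 \<otimes>\<^bsub>B\<^esub> y2) = \<alpha> x1 \<otimes>\<^bsub>K\<^esub> (\<alpha> x2 \<otimes>\<^bsub>K\<^esub> \<beta> y1) \<otimes>\<^bsub>K\<^esub> \<beta> y2"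
    using xy hom_mult[OF \<alpha>] hom_mult[OF \<beta>] hom_in_carrier[OF \<alpha>] hom_in_carrier[OF \<beta>]
    by (simp add: K.m_assoc)
  also have "\<dots> = \<alpha> x1 \<otimes>\<^bsub>K\<^esub> (\<beta> y1 \<otimes>\<^bsub>K\<^esub> \<alpha> x2) \<otimes>\<^bsub>K\<^esub> \<beta> y2"
    using xy commute by simp
  also have "\<dots> = (\<alpha> x1 \<otimes>\<^bsub>K\<^esub> \<beta> y1) \<otimes>\<^bsub>K\<^esub> (\<alpha> x2 \<otimes>\<^bsub>K\<^esub> \<beta> y2)"
    using xy hom_in_carrier[OF \<alpha>] hom_in_carrier[OF \<beta>] by (simp add: K.m_assoc)
  finally show "Inl (\<alpha> (fst (projr (z \<otimes>\<^bsub>Inr_prod_monoid A B\<^esub> w))) \<otimes>\<^bsub>K\<^esub> \<beta> (snd (projr (z \<otimes>\<^bsub>Inr_prod_monoid A B\<^esub> w))))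
      = Inl (\<alpha> (fst (projr z)) \<otimes>\<^bsub>K\<^esub> \<beta> (snd (projr z))) \<otimes>\<^bsub>Inl_monoid K\<^esub> Inl (\<alpha> (fst (projr w)) \<otimes>\<^bsub>K\<^esub> \<beta> (snd (projr w)))"
    using xy by simp
qed

declare One_nat_def [simp del]

locale butterfly_setting =
  fixes n :: nat and H :: "'h xcx" and G :: "'g xcx" and E :: "'e xcx"
    and p :: "nat \<Rightarrow> 'e \<Rightarrow> 'h" and f :: "nat \<Rightarrow> 'e \<Rightarrow> 'g"
    and \<alpha> :: "'h \<Rightarrow> 'e" and \<beta> :: "'g \<Rightarrow> 'e"
  assumes n_ge_3: "3 \<le> n" and H_rcc: "rcc n H" and G_rcc: "rcc n G" and is_butterfly: "butterfly n H G E p f \<alpha> \<beta>"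
begin

abbreviation "ES \<equiv> Estar n H G E p f \<alpha> \<beta>"

lemma E_rcc: "rcc (n-1) E" using is_butterfly unfolding butterfly_def by auto
lemma p_ccmor: "ccmor (n-1) E H p" using is_butterfly unfolding butterfly_def by auto
lemma f_ccmor: "ccmor (n-1) E G f" using is_butterfly unfolding butterfly_def by auto
lemma \<alpha>_hom: "\<alpha> \<in> hom (grp H n) (grp E (n-1))" using is_butterfly unfolding butterfly_def by auto
lemma \<beta>_hom: "\<beta> \<in> hom (grp G n) (grp E (n-1))" using is_butterfly unfolding butterfly_def by auto
lemma p_\<alpha>: "x \<in> carrier (grp H n) \<Longrightarrow> p (n-1) (\<alpha> x) = bd H n x" using is_butterfly unfolding butterfly_def by auto
lemma u_surj_below: "1 \<le> k \<Longrightarrow> k \<le> n-1 \<Longrightarrow> u_surj E H p k"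
  using is_butterfly unfolding butterfly_def by (cases "k = n-1") auto
lemma \<beta>_inj: "inj_on \<beta> (carrier (grp G n))" using is_butterfly unfolding butterfly_def by auto
lemma \<beta>_image: "\<beta> ` carrier (grp G n) = {x\<in>carrier (grp E (n-1)).
       bd E (n-1) x = \<one>\<^bsub>grp E (n-2)\<^esub> \<and> p (n-1) x = \<one>\<^bsub>grp H (n-1)\<^esub>}"
  using is_butterfly unfolding butterfly_def by auto
lemma bd_\<alpha>_mult_\<beta>: "x \<in> carrier (grp H n) \<Longrightarrow> y \<in> carrier (grp G n) \<Longrightarrow>
      bd E (n-1) (\<alpha> x \<otimes>\<^bsub>grp E (n-1)\<^esub> \<beta> y) = \<one>\<^bsub>grp E (n-2)\<^esub>"
  using is_butterfly unfolding butterfly_def by auto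
lemma \<alpha>_act: "a \<in> carrier (grp E 1) \<Longrightarrow> x \<in> carrier (grp H n) \<Longrightarrow> \<alpha> (act H n x (p 1 a)) = act E (n-1) (\<alpha> x) a"
  using is_butterfly unfolding butterfly_def by auto
lemma \<beta>_act: "a \<in> carrier (grp E 1) \<Longrightarrow> y \<in> carrier (grp G n) \<Longrightarrow> \<beta> (act G n y (f 1 a)) = act E (n-1) (\<beta> y) a"
  using is_butterfly unfolding butterfly_def by auto

lemma Estar_grp_below: "k \<noteq> n \<Longrightarrow> grp ES k = Inl_monoid (grp E k)"
  by (simp add: Estar_def Inl_monoid_def)
lemma Estar_grp_top: "grp ES n = Inr_prod_monoid (grp H n) (grp G n)"
  by (simp add: Estar_def Inr_prod_monoid_def)
lemma Estar_bd_below: "k \<noteq> n \<Longrightarrow> bd ES k z = Inl (bd E k (projl z))"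
  by (simp add: Estar_def)
lemma Estar_bd_top: "bd ES n z = Inl (\<alpha> (fst (projr z)) \<otimes>\<^bsub>grp E (n-1)\<^esub> \<beta> (snd (projr z)))"
  by (simp add: Estar_def)
lemma Estar_act_below: "k \<noteq> n \<Longrightarrow> act ES k z a = Inl (act E k (projl z) (projl a))"
  by (simp add: Estar_def)
lemma Estar_act_top: "act ES n z a = Inr (act H n (fst (projr z)) (p 1 (projl a)), act G n (snd (projr z)) (f 1 (projl a)))"
  by (simp add: Estar_def)

lemma degree_ne_top: "1 \<noteq> n" "2 \<noteq> n" "n - 1 \<noteq> n" "n - 2 \<noteq> n" using n_ge_3 by auto

lemma E_group: "1 \<le> k \<Longrightarrow> k \<le> n-1 \<Longrightarrow> group (grp E k)" using rcc_group[OF E_rcc] .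
lemma H_group: "1 \<le> k \<Longrightarrow> k \<le> n \<Longrightarrow> group (grp H k)" using rcc_group[OF H_rcc] .
lemma G_group: "1 \<le> k \<Longrightarrow> k \<le> n \<Longrightarrow> group (grp G k)" using rcc_group[OF G_rcc] .

lemma Estar_carrier_below: "k \<noteq> n \<Longrightarrow> carrier (grp ES k) = Inl ` carrier (grp E k)"
  using Estar_grp_below by simp
lemma Estar_carrier_top: "carrier (grp ES n) = Inr ` (carrier (grp H n) \<times> carrier (grp G n))"
  using Estar_grp_top by simp
lemma Estar_mult_below: "k \<noteq> n \<Longrightarrow> Inl a \<otimes>\<^bsub>grp ES k\<^esub> Inl b = Inl (a \<otimes>\<^bsub>grp E k\<^esub> b)"
  using Estar_grp_below by simp
lemma Estar_one_below: "k \<noteq> n \<Longrightarrow> \<one>\<^bsub>grp ES k\<^esub> = Inl \<one>\<^bsub>grp E k\<^esub>"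
  using Estar_grp_below by simp
lemma Estar_inv_below: "k \<noteq> n \<Longrightarrow> 1 \<le> k \<Longrightarrow> k \<le> n - 1 \<Longrightarrow> a \<in> carrier (grp E k) \<Longrightarrow>
   inv\<^bsub>grp ES k\<^esub> (Inl a) = Inl (inv\<^bsub>grp E k\<^esub> a)"
  using Estar_grp_below Inl_monoid_inv[OF E_group] by simp

lemma p1_closed: "a \<in> carrier (grp E 1) \<Longrightarrow> p 1 a \<in> carrier (grp H 1)"
  using hom_in_carrier[OF ccmor_hom[OF p_ccmor]] n_ge_3 by auto
lemma f1_closed: "a \<in> carrier (grp E 1) \<Longrightarrow> f 1 a \<in> carrier (grp G 1)"
  using hom_in_carrier[OF ccmor_hom[OF f_ccmor]] n_ge_3 by auto

lemma E_group_top: "group (grp E (n-1))" using E_group n_ge_3 by simp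
lemma H_group_top: "group (grp H n)" using H_group n_ge_3 by simp
lemma G_group_top: "group (grp G n)" using G_group n_ge_3 by simp
lemma H_group_below_top: "group (grp H (n-1))" using H_group n_ge_3 by simp

lemma \<alpha>_one: "\<alpha> \<one>\<^bsub>grp H n\<^esub> = \<one>\<^bsub>grp E (n-1)\<^esub>" using hom_one[OF \<alpha>_hom H_group_top E_group_top] .
lemma \<beta>_one: "\<beta> \<one>\<^bsub>grp G n\<^esub> = \<one>\<^bsub>grp E (n-1)\<^esub>" using hom_one[OF \<beta>_hom G_group_top E_group_top] .

lemma \<beta>_cyc: "y \<in> carrier (grp G n) \<Longrightarrow> \<beta> y \<in> cyc E (n-1) \<and> p (n-1) (\<beta> y) = \<one>\<^bsub>grp H (n-1)\<^esub>"
proof -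
  assume y: "y \<in> carrier (grp G n)"
  have "\<beta> y \<in> {x\<in>carrier (grp E (n-1)).
       bd E (n-1) x = \<one>\<^bsub>grp E (n-2)\<^esub> \<and> p (n-1) x = \<one>\<^bsub>grp H (n-1)\<^esub>}"
    using \<beta>_image y by blast
  then show ?thesis using n_ge_3 by (auto simp add: cyc_def numeral_2_eq_2)
qed

lemma \<alpha>_\<beta>_commute:
  "x \<in> carrier (grp H n) \<Longrightarrow> y \<in> carrier (grp G n) \<Longrightarrow>
   \<beta> y \<otimes>\<^bsub>grp E (n-1)\<^esub> \<alpha> x = \<alpha> x \<otimes>\<^bsub>grp E (n-1)\<^esub> \<beta> y"
  using cyc_central[OF E_rcc, of "n-1" "\<alpha> x" "\<beta> y"] \<beta>_cyc hom_in_carrier[OF \<alpha>_hom] n_ge_3 by auto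

lemma p1_one: "p 1 \<one>\<^bsub>grp E 1\<^esub> = \<one>\<^bsub>grp H 1\<^esub>"
  using hom_one[OF ccmor_hom[OF p_ccmor] E_group H_group] n_ge_3 by auto
lemma f1_one: "f 1 \<one>\<^bsub>grp E 1\<^esub> = \<one>\<^bsub>grp G 1\<^esub>"
  using hom_one[OF ccmor_hom[OF f_ccmor] E_group G_group] n_ge_3 by auto

lemma Estar_group: "\<forall>k\<in>{1..n}. group (grp ES k)"
proof
  fix k assume k: "k \<in> {1..n}"
  show "group (grp ES k)"
  proof (cases "k = n")
    case True then show ?thesis using n_ge_3 by (simp add: Estar_grp_top Inr_prod_monoid_group H_group G_group)
  next
    case False then have "k \<le> n-1" using k by auto
    then show ?thesis using k False by (simp add: Estar_grp_below Inl_monoid_group E_group)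
  qed
qed

lemma Estar_comm_group: "\<forall>k\<in>{3..n}. comm_group (grp ES k)"
proof
  fix k assume k: "k \<in> {3..n}"
  show "comm_group (grp ES k)"
  proof (cases "k = n")
    case True then show ?thesis using n_ge_3 by (simp add: Estar_grp_top Inr_prod_monoid_comm_group rcc_comm_group[OF H_rcc] rcc_comm_group[OF G_rcc])
  next
    case False then have "k \<le> n-1" using k by auto
    then show ?thesis using k False by (simp add: Estar_grp_below Inl_monoid_comm_group rcc_comm_group[OF E_rcc])
  qed
qed

lemma Estar_bd_hom: "\<forall>k\<in>{2..n}. bd ES k \<in> hom (grp ES k) (grp ES (k-1))"
proof
  fix k assume k: "k \<in> {2..n}"
  show "bd ES k \<in> hom (grp ES k) (grp ES (k-1))"
  proof (cases "k = n")
    case False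
    have eq: "bd ES k = (\<lambda>z. Inl (bd E k (projl z)))" using Estar_bd_below[OF False] by (rule ext)
    have k1n: "k - 1 \<noteq> n" using k by auto
    have hb: "bd E k \<in> hom (grp E k) (grp E (k-1))" using rcc_bd_hom[OF E_rcc] k False by auto
    show ?thesis unfolding eq Estar_grp_below[OF False] Estar_grp_below[OF k1n] by (rule Inl_monoid_hom_map[OF hb])
  next
    case True
    have "bd ES n = (\<lambda>z. Inl (\<alpha> (fst (projr z)) \<otimes>\<^bsub>grp E (n-1)\<^esub> \<beta> (snd (projr z))))"
      using Estar_bd_top by (rule ext)
    then show ?thesis
      unfolding True Estar_grp_top Estar_grp_below[OF degree_ne_top(3)]
      using Inr_prod_monoid_hom_commuting_mult[OF E_group_top \<alpha>_hom \<beta>_hom \<alpha>_\<beta>_commute] by simp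
  qed
qed

lemma Estar_act_hom: "\<forall>k\<in>{2..n}. \<forall>a\<in>carrier (grp ES 1). (\<lambda>x. act ES k x a) \<in> hom (grp ES k) (grp ES k)"
proof (intro ballI)
  fix k a assume k: "k \<in> {2..n}" and a: "a \<in> carrier (grp ES 1)"
  then obtain a' where a': "a' \<in> carrier (grp E 1)" "a = Inl a'" using Estar_carrier_below degree_ne_top by auto
  have k2: "2 \<le> k" using k by simp
  show "(\<lambda>x. act ES k x a) \<in> hom (grp ES k) (grp ES k)"
  proof (cases "k = n")
    case False
    have kn: "k \<le> n-1" using k False by auto
    have eq: "(\<lambda>x. act ES k x a) = (\<lambda>z. Inl (act E k (projl z) a'))" using Estar_act_below[OF False] a' by auto
    show ?thesis unfolding eq Estar_grp_below[OF False] by (rule Inl_monoid_hom_map[OF rcc_act_hom[OF E_rcc k2 kn a'(1)]])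
  next
    case True
    have eq: "(\<lambda>x. act ES n x a) = (\<lambda>z. Inr (act H n (fst (projr z)) (p 1 a'), act G n (snd (projr z)) (f 1 a')))"
      using Estar_act_top a' by auto
    have n2: "2 \<le> n" using n_ge_3 by simp
    show ?thesis unfolding True eq Estar_grp_top
      by (rule Inr_prod_monoid_hom_map[OF rcc_act_hom[OF H_rcc n2 order_refl p1_closed[OF a'(1)]] rcc_act_hom[OF G_rcc n2 order_refl f1_closed[OF a'(1)]]])
  qed
qed

lemma Estar_act_one: "\<forall>k\<in>{2..n}. \<forall>x\<in>carrier (grp ES k). act ES k x \<one>\<^bsub>grp ES 1\<^esub> = x"
proof (intro ballI)
  fix k x assume k: "k \<in> {2..n}" and x: "x \<in> carrier (grp ES k)"
  have o: "\<one>\<^bsub>grp ES 1\<^esub> = Inl \<one>\<^bsub>grp E 1\<^esub>" using Estar_one_below degree_ne_top by simp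
  show "act ES k x \<one>\<^bsub>grp ES 1\<^esub> = x"
  proof (cases "k = n")
    case False
    then obtain x' where x': "x' \<in> carrier (grp E k)" "x = Inl x'" using x Estar_carrier_below by auto
    have kn: "k \<le> n-1" using k False by auto
    show ?thesis using Estar_act_below[OF False] o x' rcc_act_one[OF E_rcc _ kn x'(1)] k by simp
  next
    case True
    then obtain u v where uv: "u \<in> carrier (grp H n)" "v \<in> carrier (grp G n)" "x = Inr (u, v)"
      using x Estar_carrier_top by auto
    show ?thesis using True Estar_act_top o uv p1_one f1_one rcc_act_one[OF H_rcc _ order_refl uv(1)]
      rcc_act_one[OF G_rcc _ order_refl uv(2)] n_ge_3 by simp
  qed
qed

lemma Estar_act_act: "\<forall>k\<in>{2..n}. \<forall>x\<in>carrier (grp ES k). \<forall>a\<in>carrier (grp ES 1). \<forall>b\<in>carrier (grp ES 1).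
      act ES k (act ES k x a) b = act ES k x (a \<otimes>\<^bsub>grp ES 1\<^esub> b)"
proof (intro ballI)
  fix k x a b assume k: "k \<in> {2..n}" and x: "x \<in> carrier (grp ES k)"
    and a: "a \<in> carrier (grp ES 1)" and b: "b \<in> carrier (grp ES 1)"
  obtain a' where a': "a' \<in> carrier (grp E 1)" "a = Inl a'" using a Estar_carrier_below degree_ne_top by auto
  obtain b' where b': "b' \<in> carrier (grp E 1)" "b = Inl b'" using b Estar_carrier_below degree_ne_top by auto
  have ab: "a \<otimes>\<^bsub>grp ES 1\<^esub> b = Inl (a' \<otimes>\<^bsub>grp E 1\<^esub> b')" using a' b' Estar_mult_below degree_ne_top by simp
  show "act ES k (act ES k x a) b = act ES k x (a \<otimes>\<^bsub>grp ES 1\<^esub> b)"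
  proof (cases "k = n")
    case False
    then obtain x' where x': "x' \<in> carrier (grp E k)" "x = Inl x'" using x Estar_carrier_below by auto
    have kn: "k \<le> n-1" using k False by auto
    show ?thesis using Estar_act_below[OF False] ab a' b' x' rcc_act_act[OF E_rcc _ kn x'(1) a'(1) b'(1)] k by simp
  next
    case True
    then obtain u v where uv: "u \<in> carrier (grp H n)" "v \<in> carrier (grp G n)" "x = Inr (u, v)"
      using x Estar_carrier_top by auto
    have pm: "p 1 (a' \<otimes>\<^bsub>grp E 1\<^esub> b') = p 1 a' \<otimes>\<^bsub>grp H 1\<^esub> p 1 b'"
      using hom_mult[OF ccmor_hom[OF p_ccmor] a'(1) b'(1)] n_ge_3 by auto
    have fm: "f 1 (a' \<otimes>\<^bsub>grp E 1\<^esub> b') = f 1 a' \<otimes>\<^bsub>grp G 1\<^esub> f 1 b'"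
      using hom_mult[OF ccmor_hom[OF f_ccmor] a'(1) b'(1)] n_ge_3 by auto
    have n2: "2 \<le> n" using n_ge_3 by simp
    show ?thesis using True Estar_act_top ab a' b' uv pm fm
      rcc_act_act[OF H_rcc n2 order_refl uv(1) p1_closed[OF a'(1)] p1_closed[OF b'(1)]]
      rcc_act_act[OF G_rcc n2 order_refl uv(2) f1_closed[OF a'(1)] f1_closed[OF b'(1)]] by simp
  qed
qed

lemma Estar_crossed_module: "2 \<le> n \<longrightarrow>
     (\<forall>x\<in>carrier (grp ES 2). \<forall>a\<in>carrier (grp ES 1).
        bd ES 2 (act ES 2 x a) = inv\<^bsub>grp ES 1\<^esub> a \<otimes>\<^bsub>grp ES 1\<^esub> bd ES 2 x \<otimes>\<^bsub>grp ES 1\<^esub> a) \<and>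
     (\<forall>x\<in>carrier (grp ES 2). \<forall>y\<in>carrier (grp ES 2).
        act ES 2 x (bd ES 2 y) = inv\<^bsub>grp ES 2\<^esub> y \<otimes>\<^bsub>grp ES 2\<^esub> x \<otimes>\<^bsub>grp ES 2\<^esub> y)"
proof (intro impI conjI ballI)
  have n2: "2 \<le> n - 1" using n_ge_3 by simp
  have g1: "group (grp E 1)" and g2: "group (grp E 2)" using E_group n_ge_3 by auto
  fix x a assume x: "x \<in> carrier (grp ES 2)" and a: "a \<in> carrier (grp ES 1)"
  obtain a' where a': "a' \<in> carrier (grp E 1)" "a = Inl a'" using a Estar_carrier_below degree_ne_top by auto
  obtain x' where x': "x' \<in> carrier (grp E 2)" "x = Inl x'" using x Estar_carrier_below degree_ne_top by auto
  have bx: "bd E 2 x' \<in> carrier (grp E 1)" using hom_in_carrier[OF rcc_bd_hom[OF E_rcc _ n2] x'(1)] by (simp add: One_nat_def)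
  show "bd ES 2 (act ES 2 x a) = inv\<^bsub>grp ES 1\<^esub> a \<otimes>\<^bsub>grp ES 1\<^esub> bd ES 2 x \<otimes>\<^bsub>grp ES 1\<^esub> a"
    using Estar_bd_below Estar_act_below Estar_mult_below Estar_inv_below[of 1 a'] degree_ne_top n_ge_3 a' x' rcc_bd2_act[OF E_rcc n2 x'(1) a'(1)]
      group.inv_closed[OF g1 a'(1)] bx by simp
next
  have n2: "2 \<le> n - 1" using n_ge_3 by simp
  have g2: "group (grp E 2)" using E_group n_ge_3 by auto
  fix x y assume x: "x \<in> carrier (grp ES 2)" and y: "y \<in> carrier (grp ES 2)"
  obtain x' where x': "x' \<in> carrier (grp E 2)" "x = Inl x'" using x Estar_carrier_below degree_ne_top by auto
  obtain y' where y': "y' \<in> carrier (grp E 2)" "y = Inl y'" using y Estar_carrier_below degree_ne_top by auto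
  show "act ES 2 x (bd ES 2 y) = inv\<^bsub>grp ES 2\<^esub> y \<otimes>\<^bsub>grp ES 2\<^esub> x \<otimes>\<^bsub>grp ES 2\<^esub> y"
    using Estar_bd_below Estar_act_below Estar_mult_below Estar_inv_below[of 2 y'] degree_ne_top n_ge_3 x' y' rcc_act_bd2[OF E_rcc n2 x'(1) y'(1)]
      group.inv_closed[OF g2 y'(1)] by simp
qed

lemma Estar_bd_act: "\<forall>k\<in>{3..n}. \<forall>x\<in>carrier (grp ES k). \<forall>a\<in>carrier (grp ES 1).
      bd ES k (act ES k x a) = act ES (k-1) (bd ES k x) a"
proof (intro ballI)
  fix k x a assume k: "k \<in> {3..n}" and x: "x \<in> carrier (grp ES k)" and a: "a \<in> carrier (grp ES 1)"
  obtain a' where a': "a' \<in> carrier (grp E 1)" "a = Inl a'" using a Estar_carrier_below degree_ne_top by auto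
  have k1: "k - 1 \<noteq> n" using k by auto
  show "bd ES k (act ES k x a) = act ES (k-1) (bd ES k x) a"
  proof (cases "k = n")
    case False
    then obtain x' where x': "x' \<in> carrier (grp E k)" "x = Inl x'" using x Estar_carrier_below by auto
    have kn: "k \<le> n-1" using k False by auto
    show ?thesis using Estar_act_below[OF False] Estar_act_below[OF k1] Estar_bd_below[OF False] a' x'
       rcc_bd_act[OF E_rcc _ kn x'(1) a'(1)] k by simp
  next
    case True
    then obtain u v where uv: "u \<in> carrier (grp H n)" "v \<in> carrier (grp G n)" "x = Inr (u, v)"
      using x Estar_carrier_top by auto
    have n2: "2 \<le> n - 1" using n_ge_3 by simp
    have "act E (n-1) (\<alpha> u \<otimes>\<^bsub>grp E (n-1)\<^esub> \<beta> v) a' = act E (n-1) (\<alpha> u) a' \<otimes>\<^bsub>grp E (n-1)\<^esub> act E (n-1) (\<beta> v) a'"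
      using hom_mult[OF rcc_act_hom[OF E_rcc n2 order_refl a'(1)] hom_in_carrier[OF \<alpha>_hom uv(1)] hom_in_carrier[OF \<beta>_hom uv(2)]] by simp
    then show ?thesis using True Estar_act_top Estar_act_below[OF k1] Estar_bd_top a' uv \<alpha>_act[OF a'(1) uv(1)] \<beta>_act[OF a'(1) uv(2)] by simp
  qed
qed

lemma Estar_bd_bd: "\<forall>k\<in>{3..n}. \<forall>x\<in>carrier (grp ES k). bd ES (k-1) (bd ES k x) = \<one>\<^bsub>grp ES (k-2)\<^esub>"
proof (intro ballI)
  fix k x assume k: "k \<in> {3..n}" and x: "x \<in> carrier (grp ES k)"
  have k1: "k - 1 \<noteq> n" "k - 2 \<noteq> n" using k by auto
  show "bd ES (k-1) (bd ES k x) = \<one>\<^bsub>grp ES (k-2)\<^esub>"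
  proof (cases "k = n")
    case False
    then obtain x' where x': "x' \<in> carrier (grp E k)" "x = Inl x'" using x Estar_carrier_below by auto
    have kn: "k \<le> n-1" using k False by auto
    show ?thesis using Estar_bd_below[OF False] Estar_bd_below[OF k1(1)] Estar_one_below[OF k1(2)] x'
       rcc_bd_bd[OF E_rcc _ kn x'(1)] k by simp
  next
    case True
    then obtain u v where uv: "u \<in> carrier (grp H n)" "v \<in> carrier (grp G n)" "x = Inr (u, v)"
      using x Estar_carrier_top by auto
    show ?thesis using True Estar_bd_top Estar_bd_below[OF k1(1)] Estar_one_below[OF k1(2)] uv bd_\<alpha>_mult_\<beta>[OF uv(1,2)] by simp
  qed
qed

lemma Estar_act_bd2_trivial: "\<forall>k\<in>{3..n}. \<forall>x\<in>carrier (grp ES k). \<forall>y\<in>carrier (grp ES 2). act ES k x (bd ES 2 y) = x"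
proof (intro ballI)
  fix k x y assume k: "k \<in> {3..n}" and x: "x \<in> carrier (grp ES k)" and y: "y \<in> carrier (grp ES 2)"
  obtain y' where y': "y' \<in> carrier (grp E 2)" "y = Inl y'" using y Estar_carrier_below degree_ne_top by auto
  show "act ES k x (bd ES 2 y) = x"
  proof (cases "k = n")
    case False
    then obtain x' where x': "x' \<in> carrier (grp E k)" "x = Inl x'" using x Estar_carrier_below by auto
    have kn: "k \<le> n-1" using k False by auto
    show ?thesis using Estar_act_below[OF False] Estar_bd_below degree_ne_top x' y' rcc_act_bd2_trivial[OF E_rcc _ kn x'(1) y'(1)] k by simp
  next
    case True
    then obtain u v where uv: "u \<in> carrier (grp H n)" "v \<in> carrier (grp G n)" "x = Inr (u, v)"
      using x Estar_carrier_top by auto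
    have n2: "2 \<le> n - 1" using n_ge_3 by simp
    have pb: "p 1 (bd E 2 y') = bd H 2 (p 2 y')" using ccmor_bd[OF p_ccmor _ n2 y'(1)] by (simp add: One_nat_def)
    have fb: "f 1 (bd E 2 y') = bd G 2 (f 2 y')" using ccmor_bd[OF f_ccmor _ n2 y'(1)] by (simp add: One_nat_def)
    have p2: "p 2 y' \<in> carrier (grp H 2)" using hom_in_carrier[OF ccmor_hom[OF p_ccmor _ n2] y'(1)] by simp
    have f2: "f 2 y' \<in> carrier (grp G 2)" using hom_in_carrier[OF ccmor_hom[OF f_ccmor _ n2] y'(1)] by simp
    show ?thesis using True Estar_act_top Estar_bd_below degree_ne_top uv y' pb fb
      rcc_act_bd2_trivial[OF H_rcc n_ge_3 order_refl uv(1) p2] rcc_act_bd2_trivial[OF G_rcc n_ge_3 order_refl uv(2) f2] by simp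
  qed
qed

lemma Estar_rcc: "rcc n ES"
  unfolding rcc_def using Estar_group Estar_comm_group Estar_bd_hom Estar_act_hom Estar_act_one Estar_act_act Estar_crossed_module Estar_bd_act Estar_bd_bd Estar_act_bd2_trivial n_ge_3 by simp

lemma pstar_below: "k \<noteq> n \<Longrightarrow> pstar n p k (z :: 'e + 'h \<times> 'g) = p k (projl z)" by (simp add: pstar_def)
lemma pstar_top: "pstar n p n (z :: 'e + 'h \<times> 'g) = fst (projr z)" by (simp add: pstar_def)

lemma pstar_hom: "\<forall>k\<in>{1..n}. pstar n p k \<in> hom (grp ES k) (grp H k)"
proof
  fix k assume k: "k \<in> {1..n}"
  show "pstar n p k \<in> hom (grp ES k) (grp H k)"
  proof (cases "k = n")
    case False
    have kn: "k \<le> n-1" using k False by auto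
    have eq: "(pstar n p k :: 'e + 'h \<times> 'g \<Rightarrow> 'h) = (\<lambda>z. p k (projl z))" using pstar_below[OF False] by (rule ext)
    show ?thesis unfolding eq Estar_grp_below[OF False]
      by (rule Inl_monoid_hom_projl[OF ccmor_hom[OF p_ccmor _ kn]]) (use k in simp)
  next
    case True
    have eq: "(pstar n p n :: 'e + 'h \<times> 'g \<Rightarrow> 'h) = (\<lambda>z. fst (projr z))" using pstar_top by (rule ext)
    show ?thesis unfolding True eq Estar_grp_top by (rule Inr_prod_monoid_hom_fst)
  qed
qed

lemma pstar_bd: "\<forall>k\<in>{2..n}. \<forall>x\<in>carrier (grp ES k). pstar n p (k-1) (bd ES k x) = bd H k (pstar n p k x)"
proof (intro ballI)
  fix k x assume k: "k \<in> {2..n}" and x: "x \<in> carrier (grp ES k)"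
  have k1: "k - 1 \<noteq> n" using k by auto
  show "pstar n p (k-1) (bd ES k x) = bd H k (pstar n p k x)"
  proof (cases "k = n")
    case False
    then obtain x' where x': "x' \<in> carrier (grp E k)" "x = Inl x'" using x Estar_carrier_below by auto
    have kn: "k \<le> n-1" using k False by auto
    show ?thesis using pstar_below[OF False] pstar_below[OF k1] Estar_bd_below[OF False] x' ccmor_bd[OF p_ccmor _ kn x'(1)] k
      by simp
  next
    case True
    then obtain u v where uv: "u \<in> carrier (grp H n)" "v \<in> carrier (grp G n)" "x = Inr (u, v)"
      using x Estar_carrier_top by auto
    have n1': "1 \<le> n - 1" using n_ge_3 by simp
    have "p (n-1) (\<alpha> u \<otimes>\<^bsub>grp E (n-1)\<^esub> \<beta> v) = p (n-1) (\<alpha> u) \<otimes>\<^bsub>grp H (n-1)\<^esub> p (n-1) (\<beta> v)"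
      using hom_mult[OF ccmor_hom[OF p_ccmor n1' order_refl] hom_in_carrier[OF \<alpha>_hom uv(1)] hom_in_carrier[OF \<beta>_hom uv(2)]] .
    also have "\<dots> = bd H n u" using p_\<alpha>[OF uv(1)] \<beta>_cyc[OF uv(2)]
        hom_in_carrier[OF rcc_bd_hom[OF H_rcc _ order_refl] uv(1)] H_group[OF n1'] n_ge_3
      by (simp add: monoid.r_one group.is_monoid)
    finally show ?thesis using True pstar_below[OF k1] pstar_top Estar_bd_top uv by simp
  qed
qed

lemma pstar_act: "\<forall>k\<in>{2..n}. \<forall>x\<in>carrier (grp ES k). \<forall>a\<in>carrier (grp ES 1).
      pstar n p k (act ES k x a) = act H k (pstar n p k x) (pstar n p 1 a)"
proof (intro ballI)
  fix k x a assume k: "k \<in> {2..n}" and x: "x \<in> carrier (grp ES k)" and a: "a \<in> carrier (grp ES 1)"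
  obtain a' where a': "a' \<in> carrier (grp E 1)" "a = Inl a'" using a Estar_carrier_below degree_ne_top by auto
  have pa: "pstar n p 1 a = p 1 a'" using pstar_below degree_ne_top a' by simp
  show "pstar n p k (act ES k x a) = act H k (pstar n p k x) (pstar n p 1 a)"
  proof (cases "k = n")
    case False
    then obtain x' where x': "x' \<in> carrier (grp E k)" "x = Inl x'" using x Estar_carrier_below by auto
    have kn: "k \<le> n-1" using k False by auto
    show ?thesis using pstar_below[OF False] Estar_act_below[OF False] pa x' a' ccmor_act[OF p_ccmor _ kn x'(1) a'(1)] k
      by simp
  next
    case True
    then obtain u v where uv: "u \<in> carrier (grp H n)" "v \<in> carrier (grp G n)" "x = Inr (u, v)"
      using x Estar_carrier_top by auto
    show ?thesis using True pstar_top Estar_act_top pa uv a' by simp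
  qed
qed

lemma pstar_ccmor: "ccmor n ES H (pstar n p)"
  unfolding ccmor_def using pstar_hom pstar_bd pstar_act by blast

lemma p_cyc_surj: "1 \<le> k \<Longrightarrow> k \<le> n-1 \<Longrightarrow> h \<in> cyc H k \<Longrightarrow> \<exists>e\<in>cyc E k. p k e = h"
proof -
  assume k1: "1 \<le> k" and kn: "k \<le> n-1" and h: "h \<in> cyc H k"
  show ?thesis
  proof (cases "k = 1")
    case True
    then have "h \<in> p 1 ` carrier (grp E 1)" using u_surj_below[OF k1 kn] h by (simp add: u_surj_def cyc_def)
    then obtain e where "e \<in> carrier (grp E 1)" "p 1 e = h" by blast
    then show ?thesis using True by (auto simp: cyc_def)
  next
    case False
    have hc: "h \<in> carrier (grp H k)" and hb: "bd H k h = \<one>\<^bsub>grp H (k-1)\<^esub>" using h False by (auto simp: cyc_def)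
    have k1': "1 \<le> k - 1" "k - 1 \<le> n - 1" using False k1 kn by auto
    have o: "\<one>\<^bsub>grp E (k-1)\<^esub> \<in> cyc E (k-1)" using subgroup.one_closed[OF cyc_subgroup[OF E_rcc k1']] .
    have po: "p (k-1) \<one>\<^bsub>grp E (k-1)\<^esub> = \<one>\<^bsub>grp H (k-1)\<^esub>"
      using hom_one[OF ccmor_hom[OF p_ccmor k1'] E_group[OF k1'] H_group] k1' n_ge_3 by auto
    have "(\<one>\<^bsub>grp E (k-1)\<^esub>, h) \<in> fibprod E H p k" using o hc hb po by (simp add: fibprod_def)
    then have "(\<one>\<^bsub>grp E (k-1)\<^esub>, h) \<in> (\<lambda>x. (bd E k x, p k x)) ` carrier (grp E k)"
      using u_surj_below[OF k1 kn] False unfolding u_surj_def by simp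
    then obtain x where x: "x \<in> carrier (grp E k)" "bd E k x = \<one>\<^bsub>grp E (k-1)\<^esub>" "p k x = h"
      by (auto simp: image_iff)
    then show ?thesis using False by (auto simp: cyc_def)
  qed
qed

lemma p_surj: "1 \<le> k \<Longrightarrow> k \<le> n-1 \<Longrightarrow> p k ` carrier (grp E k) = carrier (grp H k)"
proof -
  assume k1: "1 \<le> k" and kn: "k \<le> n-1"
  show ?thesis
  proof (cases "k = 1")
    case True
    then show ?thesis using u_surj_below[OF k1 kn] by (simp add: u_surj_def)
  next
    case False
    show ?thesis
    proof
      show "p k ` carrier (grp E k) \<subseteq> carrier (grp H k)" using hom_carrier[OF ccmor_hom[OF p_ccmor k1 kn]] .
    next
      show "carrier (grp H k) \<subseteq> p k ` carrier (grp E k)"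
      proof
        fix h assume hc: "h \<in> carrier (grp H k)"
        have k2: "2 \<le> k" using False k1 by simp
        have k1': "1 \<le> k - 1" "k - 1 \<le> n - 1" using False k1 kn by auto
        have bc: "bd H k h \<in> carrier (grp H (k-1))" using hom_in_carrier[OF rcc_bd_hom[OF H_rcc k2] hc] kn by simp
        have "bd H k h \<in> cyc H (k-1)"
        proof (cases "k - 1 = 1")
          case True then show ?thesis using bc by (simp add: cyc_def)
        next
          case False
          then have "bd H (k-1) (bd H k h) = \<one>\<^bsub>grp H (k-2)\<^esub>" using rcc_bd_bd[OF H_rcc _ _ hc] k2 kn by simp
          then show ?thesis using bc False by (simp add: cyc_def diff_diff_left)
        qed
        then obtain e where e: "e \<in> cyc E (k-1)" "p (k-1) e = bd H k h" using p_cyc_surj[OF k1'] by blast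
        have "(e, h) \<in> fibprod E H p k" using e hc by (simp add: fibprod_def)
        then have "(e, h) \<in> (\<lambda>x. (bd E k x, p k x)) ` carrier (grp E k)"
          using u_surj_below[OF k1 kn] False unfolding u_surj_def by simp
        then obtain x where x: "x \<in> carrier (grp E k)" "p k x = h"
          by (auto simp: image_iff)
        then show "h \<in> p k ` carrier (grp E k)" by blast
      qed
    qed
  qed
qed

lemma pstar_fibration: "fibration n ES H (pstar n p)"
  unfolding fibration_def
proof (intro conjI pstar_ccmor ballI)
  fix k assume k: "k \<in> {1..n}"
  show "pstar n p k ` carrier (grp ES k) = carrier (grp H k)"
  proof (cases "k = n")
    case False
    have kn: "k \<le> n-1" using k False by auto
    have "pstar n p k ` carrier (grp ES k) = p k ` carrier (grp E k)"
      using Estar_carrier_below[OF False] pstar_below[OF False] by (auto simp: image_iff)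
    then show ?thesis using p_surj[OF _ kn] k by simp
  next
    case True
    have o: "\<one>\<^bsub>grp G n\<^esub> \<in> carrier (grp G n)" using group.is_monoid[OF G_group] monoid.one_closed n_ge_3 by auto
    have "pstar n p n ` carrier (grp ES n) = carrier (grp H n)"
    proof
      show "pstar n p n ` carrier (grp ES n) \<subseteq> carrier (grp H n)" using Estar_carrier_top pstar_top by auto
    next
      show "carrier (grp H n) \<subseteq> pstar n p n ` carrier (grp ES n)"
      proof
        fix u assume "u \<in> carrier (grp H n)"
        then have "Inr (u, \<one>\<^bsub>grp G n\<^esub>) \<in> carrier (grp ES n)" using o Estar_carrier_top by auto
        then show "u \<in> pstar n p n ` carrier (grp ES n)" using pstar_top by (metis fst_conv image_eqI sum.sel(2))
      qed
    qed
    then show ?thesis using True by simp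
  qed
qed

lemma Estar_cyc_below: "k \<noteq> n \<Longrightarrow> 1 \<le> k \<Longrightarrow> k \<le> n \<Longrightarrow> cyc ES k = Inl ` cyc E k"
proof -
  assume kn: "k \<noteq> n" and k1: "1 \<le> k" and kn2: "k \<le> n"
  show ?thesis
  proof (cases "k = 1")
    case True then show ?thesis using Estar_carrier_below[OF kn] by (simp add: cyc_def)
  next
    case False
    have k1': "k - 1 \<noteq> n" using kn2 k1 n_ge_3 by auto
    show ?thesis using False Estar_carrier_below[OF kn] Estar_one_below[OF k1'] Estar_bd_below[OF kn]
      by (auto simp: cyc_def)
  qed
qed

lemma bd_\<alpha>: "x \<in> carrier (grp H n) \<Longrightarrow> bd E (n-1) (\<alpha> x) = \<one>\<^bsub>grp E (n-2)\<^esub>"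
proof -
  assume x: "x \<in> carrier (grp H n)"
  have "bd E (n-1) (\<alpha> x \<otimes>\<^bsub>grp E (n-1)\<^esub> \<beta> \<one>\<^bsub>grp G n\<^esub>) = \<one>\<^bsub>grp E (n-2)\<^esub>"
    using bd_\<alpha>_mult_\<beta>[OF x monoid.one_closed[OF group.is_monoid[OF G_group_top]]] .
  then show ?thesis using \<beta>_one hom_in_carrier[OF \<alpha>_hom x] E_group_top by (simp add: monoid.r_one group.is_monoid)
qed

lemma pstar_cyc_surj_top: "\<forall>w\<in>cyc H n. \<exists>x\<in>cyc ES n. pstar n p n x = w"
proof
  fix w assume w: "w \<in> cyc H n"
  have wc: "w \<in> carrier (grp H n)" and wb: "bd H n w = \<one>\<^bsub>grp H (n-1)\<^esub>" using w degree_ne_top by (auto simp: cyc_def)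
  have ac: "\<alpha> w \<in> carrier (grp E (n-1))" using hom_in_carrier[OF \<alpha>_hom wc] .
  \<comment> \<open>\<open>\<alpha> w\<close> lies in \<open>ker \<eta> \<inter> ker p = im \<beta>\<close>, so \<open>w\<close> lifts to the cycle \<open>(w, \<beta>\<inverse>(\<alpha> w)\<inverse>)\<close>\<close>
  have "\<alpha> w \<in> {x\<in>carrier (grp E (n-1)). bd E (n-1) x = \<one>\<^bsub>grp E (n-2)\<^esub> \<and> p (n-1) x = \<one>\<^bsub>grp H (n-1)\<^esub>}"
    using ac bd_\<alpha>[OF wc] p_\<alpha>[OF wc] wb by simp
  then obtain y0 where y0: "y0 \<in> carrier (grp G n)" "\<beta> y0 = \<alpha> w" using \<beta>_image by (metis imageE)
  have iy: "inv\<^bsub>grp G n\<^esub> y0 \<in> carrier (grp G n)" using group.inv_closed[OF G_group_top y0(1)] .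
  have bi: "\<beta> (inv\<^bsub>grp G n\<^esub> y0) = inv\<^bsub>grp E (n-1)\<^esub> (\<alpha> w)"
    using group_hom.hom_inv[of "grp G n" "grp E (n-1)" \<beta> y0] G_group_top E_group_top \<beta>_hom y0
    by (simp add: group_hom_def group_hom_axioms_def)
  have "\<alpha> w \<otimes>\<^bsub>grp E (n-1)\<^esub> \<beta> (inv\<^bsub>grp G n\<^esub> y0) = \<one>\<^bsub>grp E (n-1)\<^esub>"
    using bi group.r_inv[OF E_group_top ac] by simp
  then have "Inr (w, inv\<^bsub>grp G n\<^esub> y0) \<in> cyc ES n"
    using wc iy Estar_carrier_top Estar_bd_top Estar_one_below[OF degree_ne_top(3)] degree_ne_top by (simp add: cyc_def)
  moreover have "pstar n p n (Inr (w, inv\<^bsub>grp G n\<^esub> y0)) = w" using pstar_top by simp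
  ultimately show "\<exists>x\<in>cyc ES n. pstar n p n x = w" by blast
qed

lemma pstar_reflects_bdry_top: "\<forall>z\<in>cyc ES n. pstar n p n z \<in> bdry n H n \<longrightarrow> z \<in> bdry n ES n"
proof (intro ballI impI)
  fix z assume z: "z \<in> cyc ES n" and pz: "pstar n p n z \<in> bdry n H n"
  then obtain u v where uv: "u \<in> carrier (grp H n)" "v \<in> carrier (grp G n)" "z = Inr (u, v)"
    and e: "\<alpha> u \<otimes>\<^bsub>grp E (n-1)\<^esub> \<beta> v = \<one>\<^bsub>grp E (n-1)\<^esub>"
    using Estar_carrier_top Estar_bd_top Estar_one_below[OF degree_ne_top(3)] degree_ne_top by (auto simp: cyc_def)
  have u1: "u = \<one>\<^bsub>grp H n\<^esub>" using pz uv pstar_top by (simp add: bdry_def)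
  have "\<beta> v = \<one>\<^bsub>grp E (n-1)\<^esub>" using e u1 \<alpha>_one hom_in_carrier[OF \<beta>_hom uv(2)] E_group_top
    by (simp add: monoid.l_one group.is_monoid)
  then have "\<beta> v = \<beta> \<one>\<^bsub>grp G n\<^esub>" using \<beta>_one by simp
  then have "v = \<one>\<^bsub>grp G n\<^esub>" using \<beta>_inj uv(2) monoid.one_closed[OF group.is_monoid[OF G_group_top]]
    by (auto simp: inj_on_def)
  then show "z \<in> bdry n ES n" using u1 uv Estar_grp_top by (simp add: bdry_def)
qed

lemma pstar_cyc_surj_below: "k \<noteq> n \<Longrightarrow> 1 \<le> k \<Longrightarrow> k \<le> n \<Longrightarrow> \<forall>w\<in>cyc H k. \<exists>x\<in>cyc ES k. pstar n p k x = w"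
proof
  fix w assume kn: "k \<noteq> n" and k1: "1 \<le> k" and kn': "k \<le> n" and w: "w \<in> cyc H k"
  have "k \<le> n - 1" using kn kn' by simp
  then obtain e where e: "e \<in> cyc E k" "p k e = w" using p_cyc_surj[OF k1 _ w] by blast
  then show "\<exists>x\<in>cyc ES k. pstar n p k x = w" using Estar_cyc_below[OF kn k1 kn'] pstar_below[OF kn] by auto
qed

text \<open>Exactness of (B2) at \<open>E\<^sub>n\<^sub>-\<^sub>1\<close>: correcting \<open>e\<close> by \<open>\<alpha> x\<^sub>0\<close> lands in
  \<open>ker \<eta> \<inter> ker p = im \<beta>\<close>.\<close>

lemma E_cyc_top_eq_\<alpha>_mult_\<beta>:
  assumes ec: "e \<in> carrier (grp E (n-1))" and eb: "bd E (n-1) e = \<one>\<^bsub>grp E (n-2)\<^esub>"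
    and x0: "x0 \<in> carrier (grp H n)" and pe: "p (n-1) e = bd H n x0"
  obtains y0 where "y0 \<in> carrier (grp G n)" "e = \<alpha> x0 \<otimes>\<^bsub>grp E (n-1)\<^esub> \<beta> y0"
proof -
  interpret E: group "grp E (n-1)" using E_group_top .
  have n1: "1 \<le> n - 1" and n2: "2 \<le> n - 1" using n_ge_3 by auto
  interpret bd: group_hom "grp E (n-1)" "grp E (n-2)" "bd E (n-1)"
    using rcc_bd_hom[OF E_rcc n2 order_refl] E_group_top E_group[of "n-2"] n_ge_3
    by (simp add: group_hom_def group_hom_axioms_def diff_diff_left)
  interpret p: group_hom "grp E (n-1)" "grp H (n-1)" "p (n-1)"
    using ccmor_hom[OF p_ccmor n1 order_refl] E_group_top H_group_below_top
    by (simp add: group_hom_def group_hom_axioms_def)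
  have ac: "\<alpha> x0 \<in> carrier (grp E (n-1))" using hom_in_carrier[OF \<alpha>_hom x0] .
  define e' where "e' = e \<otimes>\<^bsub>grp E (n-1)\<^esub> inv\<^bsub>grp E (n-1)\<^esub> (\<alpha> x0)"
  have e'c: "e' \<in> carrier (grp E (n-1))" using ec ac by (simp add: e'_def)
  have "bd E (n-1) e' = bd E (n-1) e \<otimes>\<^bsub>grp E (n-2)\<^esub> inv\<^bsub>grp E (n-2)\<^esub> (bd E (n-1) (\<alpha> x0))"
    unfolding e'_def using bd.hom_mult[OF ec E.inv_closed[OF ac]] bd.hom_inv[OF ac] by simp
  then have b': "bd E (n-1) e' = \<one>\<^bsub>grp E (n-2)\<^esub>" using eb bd_\<alpha>[OF x0] by simp
  have bx: "bd H n x0 \<in> carrier (grp H (n-1))"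
    using hom_in_carrier[OF rcc_bd_hom[OF H_rcc _ order_refl] x0] n_ge_3 by simp
  have "p (n-1) e' = p (n-1) e \<otimes>\<^bsub>grp H (n-1)\<^esub> inv\<^bsub>grp H (n-1)\<^esub> (p (n-1) (\<alpha> x0))"
    unfolding e'_def using p.hom_mult[OF ec E.inv_closed[OF ac]] p.hom_inv[OF ac] by simp
  then have p': "p (n-1) e' = \<one>\<^bsub>grp H (n-1)\<^esub>" using pe p_\<alpha>[OF x0] bx by simp
  have "e' \<in> \<beta> ` carrier (grp G n)" using e'c b' p' \<beta>_image by simp
  then obtain y0 where y0: "y0 \<in> carrier (grp G n)" "\<beta> y0 = e'" by blast
  have "e = e' \<otimes>\<^bsub>grp E (n-1)\<^esub> \<alpha> x0" using ec ac by (simp add: e'_def E.m_assoc)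
  also have "\<dots> = \<alpha> x0 \<otimes>\<^bsub>grp E (n-1)\<^esub> \<beta> y0" using \<alpha>_\<beta>_commute[OF x0 y0(1)] y0(2) by simp
  finally show ?thesis using that y0(1) by blast
qed

lemma pstar_reflects_bdry_below_top:
  "\<forall>z\<in>cyc ES (n-1). pstar n p (n-1) z \<in> bdry n H (n-1) \<longrightarrow> z \<in> bdry n ES (n-1)"
proof (intro ballI impI)
  fix z assume z: "z \<in> cyc ES (n-1)" and pz: "pstar n p (n-1) z \<in> bdry n H (n-1)"
  have n1: "1 \<le> n - 1" and n1': "n - 1 \<noteq> 1" and nn: "n - 1 + 1 = n" using n_ge_3 by auto
  obtain e where e: "e \<in> cyc E (n-1)" "z = Inl e"
    using z Estar_cyc_below[OF degree_ne_top(3) n1 diff_le_self] by auto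
  have "e \<in> carrier (grp E (n-1)) \<and> bd E (n-1) e = \<one>\<^bsub>grp E (n-1-1)\<^esub>"
    using e(1) n1' unfolding cyc_def by simp
  then have ec: "e \<in> carrier (grp E (n-1))" and eb: "bd E (n-1) e = \<one>\<^bsub>grp E (n-2)\<^esub>"
    by (simp_all add: diff_diff_left)
  obtain x0 where x0: "x0 \<in> carrier (grp H n)" "p (n-1) e = bd H n x0"
    using pz e pstar_below[OF degree_ne_top(3)] degree_ne_top nn by (auto simp: bdry_def)
  obtain y0 where y0: "y0 \<in> carrier (grp G n)" "e = \<alpha> x0 \<otimes>\<^bsub>grp E (n-1)\<^esub> \<beta> y0"
    using E_cyc_top_eq_\<alpha>_mult_\<beta>[OF ec eb x0] .
  have "Inr (x0, y0) \<in> carrier (grp ES n)" using Estar_carrier_top x0 y0 by simp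
  moreover have "z = bd ES n (Inr (x0, y0))" using y0 e Estar_bd_top by simp
  ultimately show "z \<in> bdry n ES (n-1)" unfolding bdry_def if_not_P[OF degree_ne_top(3)] nn by blast
qed

lemma pstar_reflects_bdry_low: "1 \<le> k \<Longrightarrow> k + 2 \<le> n \<Longrightarrow> \<forall>z\<in>cyc ES k. pstar n p k z \<in> bdry n H k \<longrightarrow> z \<in> bdry n ES k"
proof (intro ballI impI)
  fix z assume k1: "1 \<le> k" and kn: "k + 2 \<le> n" and z: "z \<in> cyc ES k" and pz: "pstar n p k z \<in> bdry n H k"
  have kn0: "k \<noteq> n" "k + 1 \<noteq> n" using kn by auto
  have kn3: "k \<le> n" "k + 1 \<le> n - 1" "1 \<le> k + 1" using kn by auto
  obtain e where e: "e \<in> cyc E k" "z = Inl e" using z Estar_cyc_below[OF kn0(1) k1 kn3(1)] by auto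
  obtain h where h: "h \<in> carrier (grp H (k+1))" "p k e = bd H (k+1) h"
    using pz e pstar_below[OF kn0(1)] kn0 by (auto simp: bdry_def)
  have "(e, h) \<in> fibprod E H p (k+1)" using e h by (simp add: fibprod_def)
  then have "(e, h) \<in> (\<lambda>x. (bd E (k+1) x, p (k+1) x)) ` carrier (grp E (k+1))"
    using u_surj_below[OF kn3(3) kn3(2)] k1 unfolding u_surj_def by simp
  then obtain x where x: "x \<in> carrier (grp E (k+1))" "bd E (k+1) x = e" by (auto simp: image_iff)
  have "Inl x \<in> carrier (grp ES (k+1))" using Estar_carrier_below[OF kn0(2)] x by simp
  moreover have "z = bd ES (k+1) (Inl x)" using Estar_bd_below[OF kn0(2)] x e by simp
  ultimately show "z \<in> bdry n ES k" using kn0 by (simp add: bdry_def)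
qed

lemma pstar_htpy_iso:
  assumes k: "1 \<le> k" "k \<le> n"
  shows "htpy_map n H (pstar n p) k \<in> iso (htpy n ES k) (htpy n H k)"
proof -
  interpret pstar: xcx_morphism n ES H "pstar n p"
    using Estar_rcc H_rcc pstar_ccmor by (rule xcx_morphism.intro)
  consider "k = n" | "k = n - 1" | "k + 2 \<le> n" using k by linarith
  then show ?thesis
  proof cases
    case 1
    then show ?thesis
      using pstar.htpy_map_isoI[OF k] pstar_cyc_surj_top pstar_reflects_bdry_top by simp
  next
    case 2
    then show ?thesis
      using pstar.htpy_map_isoI[OF k pstar_cyc_surj_below[OF _ k]] pstar_reflects_bdry_below_top n_ge_3
      by simp
  next
    case 3
    then show ?thesis
      using pstar.htpy_map_isoI[OF k pstar_cyc_surj_below[OF _ k] pstar_reflects_bdry_low[OF k(1)]]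
      by simp
  qed
qed

lemma pstar_triv_fib: "triv_fib n ES H (pstar n p)"
  unfolding triv_fib_def weak_eq_def using pstar_fibration pstar_ccmor pstar_htpy_iso by auto

end

theorem mainTheorem5:
  fixes n :: nat
    and H :: "'h xcx" and G :: "'g xcx" and E :: "'e xcx"
    and p :: "nat \<Rightarrow> 'e \<Rightarrow> 'h" and f :: "nat \<Rightarrow> 'e \<Rightarrow> 'g"
    and \<alpha> :: "'h \<Rightarrow> 'e" and \<beta> :: "'g \<Rightarrow> 'e"
    and Q :: "'q xcx" and q :: "nat \<Rightarrow> 'q \<Rightarrow> 'h"
  assumes "3 \<le> n"
    and "rcc n H" and "rcc n G"
    and "butterfly n H G E p f \<alpha> \<beta>"
    and "cofibrant_wrt TYPE('e + 'h \<times> 'g) TYPE('h) n Q"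
    and "triv_fib n Q H q"
  shows "\<exists>l. weak_eq n Q (Estar n H G E p f \<alpha> \<beta>) l \<and>
             (\<forall>k\<in>{1..n}. \<forall>x\<in>carrier (grp Q k). pstar n p k (l k x) = q k x)"
proof -
  interpret butterfly_setting n H G E p f \<alpha> \<beta>
    using assms(1-4) by (rule butterfly_setting.intro)
  have Q: "rcc n Q" using assms(5) unfolding cofibrant_wrt_def by blast
  have q: "weak_eq n Q H q" using assms(6) unfolding triv_fib_def by blast
  have p: "weak_eq n ES H (pstar n p)" using pstar_triv_fib unfolding triv_fib_def by blast
  obtain l where l: "ccmor n Q ES l"
    and lift: "\<forall>k\<in>{1..n}. \<forall>x\<in>carrier (grp Q k). pstar n p k (l k x) = q k x"
    using assms(5) Estar_rcc assms(2) pstar_triv_fib q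
    unfolding cofibrant_wrt_def weak_eq_def by blast
  have "weak_eq n Q ES l" using weak_eq_of_comp[OF Q Estar_rcc assms(2) l p q lift] .
  then show ?thesis using lift by blast
qed

end
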